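(* Let $\mathsf E=\{\mathsf E_x\}_{x\in\mathcal X}$ be a non-trivial observable on $\mathcal H_S$. Its Lüders instrument $\mathcal I^L_x(\rho)=\sqrt{\mathsf E_x}\,\rho\,\sqrt{\mathsf E_x}$ is implemented by some measurement scheme constrained by the third law if and only if $\mathsf E$ is completely unsharp.
   Context: All Hilbert spaces are finite-dimensional and complex. A state is a positive operator of unit trace; it is full-rank if it is positive definite. A channel is a completely positive trace-preserving linear map. A channel is constrained by the third law if it maps every full-rank state on its input space to a full-rank state on its output space. Let $2\le\dim\mathcal H_S<\infty$. An observable is a finite family $\mathsf E=\{\mathsf E_x\}_{x\in\mathcal X}$ of nonzero operators with $0\le\mathsf E_x\le\mathbb 1$ and $\sum_x\mathsf E_x=\mathbb 1$. It is non-trivial if some $\mathsf E_x$ is not a multiple of $\mathbb 1$. It is completely unsharp if, for every $x$, the spectrum of $\mathsf E_x$ contains neither $0$ nor $1$. A measurement scheme $(\mathcal H_A,\xi,\mathcal E,\mathsf Z)$ consists of: - a finite-dimensional $\mathcal H_A$; - a state $\xi$ on $\mathcal H_A$; - a channel $\mathcal E$ on $\mathcal L(\mathcal H_S\otimes\mathcal H_A)$; - positive operators $\{\mathsf Z_x\}_{x\in\mathcal X}$ on $\mathcal H_A$ summing to $\mathbb 1$. It implements $\mathcal I_x(\rho)=\mathrm{tr}_A[(\mathbb 1\otimes\mathsf Z_x)\mathcal E(\rho\otimes\xi)]$. It is constrained by the third law if $\xi$ is full-rank and $\mathcal E$ is constrained by the third law. *)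

theory Defs
  imports "Jordan_Normal_Form.Char_Poly"
begin

text \<open>Operators on a d-dimensional Hilbert space are complex d x d matrices
(Jordan_Normal_Form type complex mat, with carrier_mat d d).
Tensor products are Kronecker products: the left factor is the major index.\<close>

definition mtrace :: "complex mat \<Rightarrow> complex" where
  "mtrace A = (\<Sum>i<dim_row A. A $$ (i, i))"

definition qform :: "nat \<Rightarrow> complex mat \<Rightarrow> complex vec \<Rightarrow> complex" where
  "qform d A v = (\<Sum>i<d. \<Sum>j<d. cnj (v $ i) * A $$ (i, j) * v $ j)"

definition positive_op :: "nat \<Rightarrow> complex mat \<Rightarrow> bool" where
  "positive_op d A \<longleftrightarrow> A \<in> carrier_mat d d \<and>
     (\<forall>v \<in> carrier_vec d. Im (qform d A v) = 0 \<and> Re (qform d A v) \<ge> 0)"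

definition pos_def_op :: "nat \<Rightarrow> complex mat \<Rightarrow> bool" where
  "pos_def_op d A \<longleftrightarrow> A \<in> carrier_mat d d \<and>
     (\<forall>v \<in> carrier_vec d. v \<noteq> 0\<^sub>v d \<longrightarrow> Im (qform d A v) = 0 \<and> Re (qform d A v) > 0)"

definition is_state :: "nat \<Rightarrow> complex mat \<Rightarrow> bool" where
  "is_state d \<rho> \<longleftrightarrow> positive_op d \<rho> \<and> mtrace \<rho> = 1"

definition full_rank_state :: "nat \<Rightarrow> complex mat \<Rightarrow> bool" where
  "full_rank_state d \<rho> \<longleftrightarrow> is_state d \<rho> \<and> pos_def_op d \<rho>"

definition kron :: "complex mat \<Rightarrow> complex mat \<Rightarrow> complex mat" where
  "kron A B = mat (dim_row A * dim_row B) (dim_col A * dim_col B)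
     (\<lambda>(i, j). A $$ (i div dim_row B, j div dim_col B) * B $$ (i mod dim_row B, j mod dim_col B))"

definition ptrace2 :: "nat \<Rightarrow> nat \<Rightarrow> complex mat \<Rightarrow> complex mat" where
  "ptrace2 dA dB M = mat dA dA (\<lambda>(i, j). \<Sum>b<dB. M $$ (i * dB + b, j * dB + b))"

definition linear_map :: "nat \<Rightarrow> nat \<Rightarrow> (complex mat \<Rightarrow> complex mat) \<Rightarrow> bool" where
  "linear_map n m \<Phi> \<longleftrightarrow>
     (\<forall>A \<in> carrier_mat n n. \<Phi> A \<in> carrier_mat m m) \<and>
     (\<forall>A \<in> carrier_mat n n. \<forall>B \<in> carrier_mat n n. \<Phi> (A + B) = \<Phi> A + \<Phi> B) \<and>
     (\<forall>A \<in> carrier_mat n n. \<forall>c. \<Phi> (c \<cdot>\<^sub>m A) = c \<cdot>\<^sub>m \<Phi> A)"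

definition block :: "nat \<Rightarrow> complex mat \<Rightarrow> nat \<Rightarrow> nat \<Rightarrow> complex mat" where
  "block n X i j = mat n n (\<lambda>(a, b). X $$ (i * n + a, j * n + b))"

text \<open>The map id_k tensor Phi on L(C^k tensor C^n).\<close>
definition ampl :: "nat \<Rightarrow> nat \<Rightarrow> nat \<Rightarrow> (complex mat \<Rightarrow> complex mat) \<Rightarrow> complex mat \<Rightarrow> complex mat" where
  "ampl k n m \<Phi> X = mat (k * m) (k * m)
     (\<lambda>(p, q). \<Phi> (block n X (p div m) (q div m)) $$ (p mod m, q mod m))"

definition completely_positive :: "nat \<Rightarrow> nat \<Rightarrow> (complex mat \<Rightarrow> complex mat) \<Rightarrow> bool" where
  "completely_positive n m \<Phi> \<longleftrightarrow>
     (\<forall>k. \<forall>X. positive_op (k * n) X \<longrightarrow> positive_op (k * m) (ampl k n m \<Phi> X))"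

definition trace_preserving :: "nat \<Rightarrow> (complex mat \<Rightarrow> complex mat) \<Rightarrow> bool" where
  "trace_preserving n \<Phi> \<longleftrightarrow> (\<forall>A \<in> carrier_mat n n. mtrace (\<Phi> A) = mtrace A)"

definition is_channel :: "nat \<Rightarrow> nat \<Rightarrow> (complex mat \<Rightarrow> complex mat) \<Rightarrow> bool" where
  "is_channel n m \<Phi> \<longleftrightarrow> linear_map n m \<Phi> \<and> completely_positive n m \<Phi> \<and> trace_preserving n \<Phi>"

definition third_law_channel :: "nat \<Rightarrow> nat \<Rightarrow> (complex mat \<Rightarrow> complex mat) \<Rightarrow> bool" where
  "third_law_channel n m \<Phi> \<longleftrightarrow> is_channel n m \<Phi> \<and>
     (\<forall>\<rho>. full_rank_state n \<rho> \<longrightarrow> full_rank_state m (\<Phi> \<rho>))"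

definition msum :: "nat \<Rightarrow> 'x set \<Rightarrow> ('x \<Rightarrow> complex mat) \<Rightarrow> complex mat" where
  "msum d X F = mat d d (\<lambda>(i, j). \<Sum>x\<in>X. F x $$ (i, j))"

definition observable :: "nat \<Rightarrow> 'x set \<Rightarrow> ('x \<Rightarrow> complex mat) \<Rightarrow> bool" where
  "observable d X E \<longleftrightarrow> finite X \<and>
     (\<forall>x \<in> X. E x \<noteq> 0\<^sub>m d d \<and> positive_op d (E x) \<and> positive_op d (1\<^sub>m d - E x)) \<and>
     msum d X E = 1\<^sub>m d"

definition nontrivial_obs :: "nat \<Rightarrow> 'x set \<Rightarrow> ('x \<Rightarrow> complex mat) \<Rightarrow> bool" where
  "nontrivial_obs d X E \<longleftrightarrow> (\<exists>x \<in> X. \<not> (\<exists>c. E x = c \<cdot>\<^sub>m 1\<^sub>m d))"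

definition completely_unsharp :: "'x set \<Rightarrow> ('x \<Rightarrow> complex mat) \<Rightarrow> bool" where
  "completely_unsharp X E \<longleftrightarrow> (\<forall>x \<in> X. \<not> eigenvalue (E x) 0 \<and> \<not> eigenvalue (E x) 1)"

definition psd_sqrt :: "nat \<Rightarrow> complex mat \<Rightarrow> complex mat" where
  "psd_sqrt d A = (THE B. positive_op d B \<and> B * B = A)"

definition lueders :: "nat \<Rightarrow> ('x \<Rightarrow> complex mat) \<Rightarrow> 'x \<Rightarrow> complex mat \<Rightarrow> complex mat" where
  "lueders d E x \<rho> = psd_sqrt d (E x) * \<rho> * psd_sqrt d (E x)"

text \<open>Measurement scheme (H_A = C^dA, xi, channel Phi on S tensor A, pointer Z)
for system dimension dS and outcome set X.\<close>
definition measurement_scheme ::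
  "nat \<Rightarrow> 'x set \<Rightarrow> nat \<Rightarrow> complex mat \<Rightarrow> (complex mat \<Rightarrow> complex mat) \<Rightarrow> ('x \<Rightarrow> complex mat) \<Rightarrow> bool" where
  "measurement_scheme dS X dA \<xi> \<Phi> Z \<longleftrightarrow>
     is_state dA \<xi> \<and> is_channel (dS * dA) (dS * dA) \<Phi> \<and>
     (\<forall>x \<in> X. positive_op dA (Z x)) \<and> msum dA X Z = 1\<^sub>m dA"

definition third_law_scheme ::
  "nat \<Rightarrow> 'x set \<Rightarrow> nat \<Rightarrow> complex mat \<Rightarrow> (complex mat \<Rightarrow> complex mat) \<Rightarrow> ('x \<Rightarrow> complex mat) \<Rightarrow> bool" where
  "third_law_scheme dS X dA \<xi> \<Phi> Z \<longleftrightarrow>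
     measurement_scheme dS X dA \<xi> \<Phi> Z \<and> full_rank_state dA \<xi> \<and>
     third_law_channel (dS * dA) (dS * dA) \<Phi>"

definition scheme_instrument ::
  "nat \<Rightarrow> nat \<Rightarrow> complex mat \<Rightarrow> (complex mat \<Rightarrow> complex mat) \<Rightarrow> ('x \<Rightarrow> complex mat) \<Rightarrow> 'x \<Rightarrow> complex mat \<Rightarrow> complex mat" where
  "scheme_instrument dS dA \<xi> \<Phi> Z x \<rho> =
     ptrace2 dS dA (kron (1\<^sub>m dS) (Z x) * \<Phi> (kron \<rho> \<xi>))"

end

theory Submission
  imports Defs "Jordan_Normal_Form.Schur_Decomposition" "Jordan_Normal_Form.Spectral_Radius"
begin

text \<open>
  Necessity: feed the maximally mixed system state. The probe state is full rank and the channel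
  preserves full rank, so \<open>\<sigma> = \<Phi>(\<rho> \<otimes> \<xi>)\<close> is positive definite, and the Lueders output \<open>E\<^sub>x / d\<close>
  equals \<open>tr\<^sub>A[(1 \<otimes> Z\<^sub>x) \<sigma>]\<close>. Such a partial trace is positive definite unless \<open>Z\<^sub>x = 0\<close>, which
  would force \<open>E\<^sub>x = 0\<close>. Hence every effect is positive definite; and an eigenvector of \<open>E\<^sub>x\<close> with
  eigenvalue \<open>1\<close> would be annihilated by every other effect, one of which exists by non-triviality.

  Sufficiency: if no effect has eigenvalue \<open>0\<close>, take the ancilla \<open>\<complex>\<^sup>N\<close> (one basis state per
  outcome) in its maximally mixed state, the projections onto the basis states as pointer, and
  the channel \<open>M \<mapsto> \<Sum>\<^sub>c \<surd>E\<^sub>c tr\<^sub>A(M) \<surd>E\<^sub>c \<otimes> |c\<rangle>\<langle>c|\<close>. It has Kraus operators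
  \<open>\<surd>E\<^sub>c \<otimes> |c\<rangle>\<langle>a|\<close>, preserves the trace since \<open>\<Sum>\<^sub>c E\<^sub>c = 1\<close>, and keeps full rank because every
  \<open>\<surd>E\<^sub>c\<close> is injective. The square roots come from unitary diagonalisation of Hermitian
  matrices, proved by deflation.
\<close>

section \<open>Adjoints and quadratic forms\<close>

lemma index_mat_adjoint [simp]:
  "i < dim_col A \<Longrightarrow> j < dim_row A \<Longrightarrow> mat_adjoint A $$ (i, j) = cnj (A $$ (j, i))"
  by (simp add: mat_adjoint_def mat_of_rows_def)

lemma dim_mat_adjoint [simp]:
  "dim_row (mat_adjoint A) = dim_col A" "dim_col (mat_adjoint A) = dim_row A"
  by (simp_all add: mat_adjoint_def mat_of_rows_def)

lemma mat_adjoint_carrier [simp]: "A \<in> carrier_mat m n \<Longrightarrow> mat_adjoint A \<in> carrier_mat n m"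
  unfolding carrier_mat_def by simp

lemma mat_adjoint_adjoint [simp]: "mat_adjoint (mat_adjoint (A :: complex mat)) = A"
  by (rule eq_matI) auto

lemma mat_adjoint_one [simp]: "mat_adjoint (1\<^sub>m n :: complex mat) = 1\<^sub>m n"
  by (rule eq_matI) auto

lemma mat_adjoint_minus:
  "A \<in> carrier_mat m n \<Longrightarrow> B \<in> carrier_mat m n \<Longrightarrow>
    mat_adjoint (A - B :: complex mat) = mat_adjoint A - mat_adjoint B"
  by (rule eq_matI) auto

lemma mat_adjoint_mult:
  assumes "A \<in> carrier_mat m k" "B \<in> carrier_mat k n"
  shows "mat_adjoint (A * B :: complex mat) = mat_adjoint B * mat_adjoint A"
  using assms by (intro eq_matI) (auto simp: scalar_prod_def cnj_sum mult.commute intro!: sum.cong)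

lemma index_mult_mat_sum:
  "A \<in> carrier_mat m k \<Longrightarrow> B \<in> carrier_mat k n \<Longrightarrow> i < m \<Longrightarrow> j < n \<Longrightarrow>
    (A * B) $$ (i, j) = (\<Sum>l<k. A $$ (i, l) * B $$ (l, j))"
  by (auto simp: scalar_prod_def lessThan_atLeast0 intro!: sum.cong)

lemma index_mat_adjoint_mult_self:
  fixes W :: "complex mat"
  shows "W \<in> carrier_mat n m \<Longrightarrow> i < m \<Longrightarrow> j < m \<Longrightarrow>
    (mat_adjoint W * W) $$ (i, j) = col W j \<bullet>c col W i"
  by (simp add: scalar_prod_def mult.commute)

lemma index_mult_mult_adjoint:
  assumes V: "V \<in> carrier_mat m n" and M: "M \<in> carrier_mat n n" and s: "s < m" and t: "t < m"
  shows "(V * M * mat_adjoint V) $$ (s, t)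
    = (\<Sum>a<n. \<Sum>b<n. V $$ (s, a) * M $$ (a, b) * cnj (V $$ (t, b)))"
proof -
  have "(V * M * mat_adjoint V) $$ (s, t)
      = (\<Sum>b<n. \<Sum>a<n. V $$ (s, a) * M $$ (a, b) * cnj (V $$ (t, b)))"
    using assms
    by (simp add: index_mult_mat_sum[OF mult_carrier_mat[OF V M] mat_adjoint_carrier[OF V]]
        index_mult_mat_sum[OF V M] sum_distrib_right del: index_mult_mat)
  also have "\<dots> = (\<Sum>a<n. \<Sum>b<n. V $$ (s, a) * M $$ (a, b) * cnj (V $$ (t, b)))"
    by (rule sum.swap)
  finally show ?thesis .
qed

lemma cscalar_prod_adjoint:
  fixes A :: "complex mat"
  assumes A: "A \<in> carrier_mat m n" and u: "u \<in> carrier_vec n" and v: "v \<in> carrier_vec m"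
  shows "(A *\<^sub>v u) \<bullet>c v = u \<bullet>c (mat_adjoint A *\<^sub>v v)"
proof -
  have "(A *\<^sub>v u) \<bullet>c v = (\<Sum>i<m. \<Sum>l<n. A $$ (i, l) * u $ l * cnj (v $ i))"
    using A u v by (simp add: scalar_prod_def lessThan_atLeast0 sum_distrib_right mult.assoc)
  also have "\<dots> = (\<Sum>l<n. \<Sum>i<m. A $$ (i, l) * u $ l * cnj (v $ i))"
    by (rule sum.swap)
  also have "\<dots> = u \<bullet>c (mat_adjoint A *\<^sub>v v)"
    using A u v by (simp add: scalar_prod_def lessThan_atLeast0 cnj_sum sum_distrib_left mult_ac)
  finally show ?thesis .
qed

lemma cscalar_prod_smult:
  fixes u w :: "complex vec"
  assumes "u \<in> carrier_vec n" "w \<in> carrier_vec n"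
  shows "(c \<cdot>\<^sub>v u) \<bullet>c (e \<cdot>\<^sub>v w) = c * cnj e * (u \<bullet>c w)"
  using assms by (simp add: conjugate_smult_vec)

lemma cscalar_prod_unit_vec:
  fixes A :: "complex mat"
  assumes "A \<in> carrier_mat d d" "k < d" "l < d"
  shows "(A *\<^sub>v unit_vec d l) \<bullet>c unit_vec d k = A $$ (k, l)"
proof -
  have "conjugate (unit_vec d k :: complex vec) = unit_vec d k"
    by (rule eq_vecI) (auto simp: unit_vec_def)
  then show ?thesis using assms by simp
qed

lemma qform_eq_cscalar_prod:
  assumes "A \<in> carrier_mat d d" "v \<in> carrier_vec d"
  shows "qform d A v = (A *\<^sub>v v) \<bullet>c v"
  using assms
  by (simp add: qform_def scalar_prod_def lessThan_atLeast0 sum_distrib_left mult_ac)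

lemma qform_smult: "A \<in> carrier_mat d d \<Longrightarrow> qform d (c \<cdot>\<^sub>m A) v = c * qform d A v"
  by (simp add: qform_def sum_distrib_left mult_ac)

lemma qform_add_smult:
  assumes A: "A \<in> carrier_mat d d" and u: "u \<in> carrier_vec d" and w: "w \<in> carrier_vec d"
  shows "qform d A (u + c \<cdot>\<^sub>v w) = qform d A u + c * cnj c * qform d A w
    + c * ((A *\<^sub>v w) \<bullet>c u) + cnj c * ((A *\<^sub>v u) \<bullet>c w)"
proof -
  have Au: "A *\<^sub>v u \<in> carrier_vec d" and Aw: "A *\<^sub>v w \<in> carrier_vec d" using A u w by auto
  have "A *\<^sub>v (u + c \<cdot>\<^sub>v w) = A *\<^sub>v u + c \<cdot>\<^sub>v (A *\<^sub>v w)"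
    using A u w by (simp add: mult_add_distrib_mat_vec mult_mat_vec)
  then show ?thesis
    using A u w Au Aw
    by (simp add: qform_eq_cscalar_prod conjugate_add_vec conjugate_smult_vec
        add_scalar_prod_distrib[of _ d] scalar_prod_add_distrib[of _ d] algebra_simps)
qed

lemma qform_msum:
  assumes "finite X" "\<And>x. x \<in> X \<Longrightarrow> F x \<in> carrier_mat d d"
  shows "qform d (msum d X F) v = (\<Sum>x\<in>X. qform d (F x) v)"
proof -
  have "qform d (msum d X F) v = (\<Sum>i<d. \<Sum>j<d. \<Sum>x\<in>X. cnj (v $ i) * F x $$ (i, j) * v $ j)"
    by (simp add: qform_def msum_def sum_distrib_left sum_distrib_right)
  also have "\<dots> = (\<Sum>x\<in>X. qform d (F x) v)"
    unfolding qform_def by (simp add: sum.swap[where B = X])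
  finally show ?thesis .
qed

lemma qform_congruence:
  assumes A: "A \<in> carrier_mat n n" and W: "W \<in> carrier_mat n m" and v: "v \<in> carrier_vec m"
  shows "qform m (mat_adjoint W * A * W) v = qform n A (W *\<^sub>v v)"
proof -
  have Wv: "W *\<^sub>v v \<in> carrier_vec n" using W v by simp
  have WA: "mat_adjoint W * A \<in> carrier_mat m n" by (rule mult_carrier_mat[OF mat_adjoint_carrier[OF W] A])
  have "qform m (mat_adjoint W * A * W) v = (mat_adjoint W *\<^sub>v (A *\<^sub>v (W *\<^sub>v v))) \<bullet>c v"
    using qform_eq_cscalar_prod[OF mult_carrier_mat[OF WA W] v] assoc_mult_mat_vec[OF WA W v]
      assoc_mult_mat_vec[OF mat_adjoint_carrier[OF W] A Wv] by simp
  also have "\<dots> = qform n A (W *\<^sub>v v)"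
    using A W v cscalar_prod_adjoint[OF mat_adjoint_carrier[OF W] mult_mat_vec_carrier[OF A Wv] v]
    by (simp add: qform_eq_cscalar_prod[OF A Wv])
  finally show ?thesis .
qed

section \<open>Positive operators\<close>

lemma positive_op_iff:
  "positive_op d A \<longleftrightarrow> A \<in> carrier_mat d d \<and> (\<forall>v \<in> carrier_vec d. 0 \<le> qform d A v)"
  by (auto simp: positive_op_def less_eq_complex_def)

lemma pos_def_op_iff:
  "pos_def_op d A \<longleftrightarrow>
    A \<in> carrier_mat d d \<and> (\<forall>v \<in> carrier_vec d. v \<noteq> 0\<^sub>v d \<longrightarrow> 0 < qform d A v)"
  by (auto simp: pos_def_op_def less_complex_def)

lemma pos_def_op_imp_positive_op: "pos_def_op d A \<Longrightarrow> positive_op d A"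
  by (auto simp: positive_op_iff pos_def_op_iff qform_def intro: less_imp_le)

lemma pos_def_op_kernel:
  assumes A: "pos_def_op d A" and v: "v \<in> carrier_vec d" and Av: "A *\<^sub>v v = 0\<^sub>v d"
  shows "v = 0\<^sub>v d"
proof (rule ccontr)
  assume "v \<noteq> 0\<^sub>v d"
  then have "0 < qform d A v" using A v by (simp add: pos_def_op_iff)
  moreover have "qform d A v = 0" using A v Av by (simp add: pos_def_op_def qform_eq_cscalar_prod)
  ultimately show False by simp
qed

lemma eigenvalue_zero_iff:
  fixes A :: "complex mat"
  assumes "A \<in> carrier_mat d d"
  shows "eigenvalue A 0 \<longleftrightarrow> (\<exists>v \<in> carrier_vec d. v \<noteq> 0\<^sub>v d \<and> A *\<^sub>v v = 0\<^sub>v d)"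
proof -
  have z: "(0 :: complex) \<cdot>\<^sub>v v = 0\<^sub>v d" if "v \<in> carrier_vec d" for v
    using that by (intro eq_vecI) auto
  note dim = carrier_matD(1)[OF assms]
  show ?thesis
  proof
    assume "eigenvalue A 0"
    then obtain v where v: "v \<in> carrier_vec d" "v \<noteq> 0\<^sub>v d" "A *\<^sub>v v = 0 \<cdot>\<^sub>v v"
      unfolding eigenvalue_def eigenvector_def dim by blast
    then show "\<exists>v \<in> carrier_vec d. v \<noteq> 0\<^sub>v d \<and> A *\<^sub>v v = 0\<^sub>v d" using z[OF v(1)] by auto
  next
    assume "\<exists>v \<in> carrier_vec d. v \<noteq> 0\<^sub>v d \<and> A *\<^sub>v v = 0\<^sub>v d"
    then obtain v where v: "v \<in> carrier_vec d" "v \<noteq> 0\<^sub>v d" "A *\<^sub>v v = 0\<^sub>v d" by blast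
    then show "eigenvalue A 0"
      using z[OF v(1)] unfolding eigenvalue_def eigenvector_def dim by auto
  qed
qed

definition hermitian :: "complex mat \<Rightarrow> bool" where
  "hermitian A \<longleftrightarrow> mat_adjoint A = A"

lemma positive_op_hermitian:
  assumes P: "positive_op d A"
  shows "hermitian A"
  unfolding hermitian_def
proof (rule eq_matI)
  have A: "A \<in> carrier_mat d d" using P by (simp add: positive_op_def)
  fix i j assume "i < dim_row A" "j < dim_col A"
  then have i: "i < d" and j: "j < d" using A by auto
  note entry = cscalar_prod_unit_vec[OF A]
  have real: "Im (qform d A v) = 0" if "v \<in> carrier_vec d" for v
    using P that by (simp add: positive_op_def)
  have "Im (c * A $$ (i, j) + cnj c * A $$ (j, i)) = 0" for c
  proof -
    have "qform d A (unit_vec d i + c \<cdot>\<^sub>v unit_vec d j) = qform d A (unit_vec d i)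
        + c * cnj c * qform d A (unit_vec d j) + (c * A $$ (i, j) + cnj c * A $$ (j, i))"
      by (simp add: qform_add_smult[OF A] entry i j)
    then show ?thesis
      using real[of "unit_vec d i + c \<cdot>\<^sub>v unit_vec d j"] real[of "unit_vec d i"]
        real[of "unit_vec d j"] by (simp add: complex_mult_cnj)
  qed
  from this[of 1] this[of \<i>]
  have "Im (A $$ (i, j) + A $$ (j, i)) = 0" "Re (A $$ (i, j) - A $$ (j, i)) = 0" by simp_all
  then show "mat_adjoint A $$ (i, j) = A $$ (i, j)"
    using A i j by (simp add: complex_eq_iff)
qed (use P in \<open>auto simp: positive_op_def\<close>)

lemma hermitian_mult_adjoint:
  assumes "A \<in> carrier_mat n n" "W \<in> carrier_mat n m" "hermitian A"
  shows "hermitian (mat_adjoint W * A * W)"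
  using assms
  by (simp add: hermitian_def mat_adjoint_mult[of _ m n _ m] mat_adjoint_mult[of _ n n _ m]
      assoc_mult_mat[of _ m n _ n _ m])

lemma positive_op_congruence:
  assumes A: "positive_op n A" and W: "W \<in> carrier_mat n m"
  shows "positive_op m (mat_adjoint W * A * W)"
  using A W qform_congruence[OF _ W]
  by (auto simp: positive_op_iff mult_carrier_mat[of _ m n _ n])

lemma positive_op_diagonal_nonneg:
  assumes D: "positive_op n D" and i: "i < n"
  shows "0 \<le> D $$ (i, i)"
proof -
  have Dc: "D \<in> carrier_mat n n" using D by (simp add: positive_op_def)
  have "0 \<le> qform n D (unit_vec n i)" using D by (simp add: positive_op_iff)
  then show ?thesis
    using qform_eq_cscalar_prod[OF Dc unit_vec_carrier] cscalar_prod_unit_vec[OF Dc i i] by simp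
qed

lemma positive_op_mat_diag:
  assumes "\<And>i. i < n \<Longrightarrow> 0 \<le> f i"
  shows "positive_op n (mat_diag n f)"
  unfolding positive_op_iff
proof (intro conjI ballI)
  fix v :: "complex vec" assume "v \<in> carrier_vec n"
  have "qform n (mat_diag n f) v = (\<Sum>i<n. f i * (cnj (v $ i) * v $ i))"
    by (simp add: qform_def mat_diag_def if_distrib if_distribR mult_ac cong: if_cong)
  also have "0 \<le> \<dots>"
  proof (rule sum_nonneg)
    fix i assume "i \<in> {..<n}"
    moreover have "0 \<le> cnj z * z" for z :: complex
      by (simp add: mult.commute[of "cnj z"] complex_mult_cnj less_eq_complex_def)
    ultimately show "0 \<le> f i * (cnj (v $ i) * v $ i)" using assms by (simp add: mult_nonneg_nonneg)
  qed
  finally show "0 \<le> qform n (mat_diag n f) v" .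
qed simp

lemma diagonal_mat_eq_mat_diag:
  assumes "D \<in> carrier_mat n n" "diagonal_mat D"
  shows "D = mat_diag n (\<lambda>i. D $$ (i, i))"
  using assms by (intro eq_matI) (auto simp: diagonal_mat_def mat_diag_def)

section \<open>Unitary diagonalisation of Hermitian matrices\<close>

definition unitary :: "nat \<Rightarrow> complex mat \<Rightarrow> bool" where
  "unitary n U \<longleftrightarrow> U \<in> carrier_mat n n \<and> mat_adjoint U * U = 1\<^sub>m n"

lemma unitary_right_inverse: "unitary n U \<Longrightarrow> U * mat_adjoint U = 1\<^sub>m n"
  unfolding unitary_def by (metis mat_adjoint_carrier mat_mult_left_right_inverse)

lemma unitary_mult:
  assumes "unitary n U" "unitary n V"
  shows "unitary n (U * V)"
proof -
  have U: "U \<in> carrier_mat n n" "mat_adjoint U * U = 1\<^sub>m n"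
    and V: "V \<in> carrier_mat n n" "mat_adjoint V * V = 1\<^sub>m n"
    using assms by (auto simp: unitary_def)
  have "mat_adjoint (U * V) * (U * V) = mat_adjoint V * ((mat_adjoint U * U) * V)"
    using U(1) V(1) by (simp add: mat_adjoint_mult[of U n n V n] assoc_mult_mat[of _ n n _ n _ n])
  also have "\<dots> = 1\<^sub>m n" unfolding U(2) left_mult_one_mat[OF V(1)] by (rule V(2))
  finally show ?thesis using U V by (simp add: unitary_def)
qed

definition normalize_vec :: "complex vec \<Rightarrow> complex vec" where
  "normalize_vec w = of_real (1 / sqrt (Re (w \<bullet>c w))) \<cdot>\<^sub>v w"

lemma normalize_vec_carrier [simp]: "w \<in> carrier_vec n \<Longrightarrow> normalize_vec w \<in> carrier_vec n"
  by (simp add: normalize_vec_def)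

lemma normalize_vec_cscalar_prod:
  assumes "u \<in> carrier_vec n" "w \<in> carrier_vec n"
  shows "normalize_vec u \<bullet>c normalize_vec w
    = of_real (1 / sqrt (Re (u \<bullet>c u)) * (1 / sqrt (Re (w \<bullet>c w)))) * (u \<bullet>c w)"
  unfolding normalize_vec_def cscalar_prod_smult[OF assms] by simp

lemma normalize_vec_unit:
  assumes w: "w \<in> carrier_vec n" and w0: "w \<noteq> 0\<^sub>v n"
  shows "normalize_vec w \<bullet>c normalize_vec w = 1"
proof -
  have pos: "0 < w \<bullet>c w" using w w0 by simp
  then have "w \<bullet>c w = of_real (Re (w \<bullet>c w))" "0 < Re (w \<bullet>c w)"
    by (simp_all add: less_complex_def complex_eq_iff)
  then show ?thesis
    using normalize_vec_cscalar_prod[OF w w] pos by (simp add: real_sqrt_mult[symmetric])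
qed

lemma normalize_vec_unit_id: "w \<bullet>c w = 1 \<Longrightarrow> normalize_vec w = w"
  by (simp add: normalize_vec_def)

lemma unitary_completion:
  assumes v: "v \<in> carrier_vec n" and v1: "v \<bullet>c v = 1"
  shows "\<exists>W. unitary n W \<and> col W 0 = v"
proof -
  interpret cof_vec_space n "TYPE(complex)" .
  have v0: "v \<noteq> 0\<^sub>v n" using v1 by auto
  then have n: "0 < n" using v by (cases n) auto
  note completion = basis_completion[OF v v0]
  define ws where "ws = gram_schmidt n (basis_completion v)"
  from gram_schmidt_result[OF completion(2,4,5) ws_def]
  have ws: "set ws \<subseteq> carrier_vec n" "corthogonal ws" "length ws = n"
    using completion(6) by auto
  have ws_nth: "ws ! i \<in> carrier_vec n" if "i < n" for i using ws that by auto
  have ws_orth: "ws ! i \<bullet>c ws ! j = 0 \<longleftrightarrow> i \<noteq> j" if "i < n" "j < n" for i j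
    using corthogonalD[OF ws(2)] ws(3) that by simp
  have "basis_completion v = v # tl (basis_completion v)"
    by (simp add: basis_completion_def Let_def)
  then have "hd ws = v" unfolding ws_def by (metis gram_schmidt_hd v)
  then have ws0: "ws ! 0 = v" using ws n by (metis hd_conv_nth list.size(3) not_less0)
  define W where "W = mat_of_cols n (map normalize_vec ws)"
  have W: "W \<in> carrier_mat n n" unfolding carrier_mat_def by (simp add: W_def ws)
  have colW: "col W j = normalize_vec (ws ! j)" if "j < n" for j
    using that ws_nth[OF that] ws(3) by (simp add: W_def)
  have "mat_adjoint W * W = 1\<^sub>m n"
  proof (rule eq_matI)
    fix i j assume "i < dim_row (1\<^sub>m n)" "j < dim_col (1\<^sub>m n)"
    then have i: "i < n" and j: "j < n" by auto
    have "(mat_adjoint W * W) $$ (i, j) = normalize_vec (ws ! j) \<bullet>c normalize_vec (ws ! i)"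
      by (simp only: index_mat_adjoint_mult_self[OF W i j] colW[OF i] colW[OF j])
    also have "\<dots> = 1\<^sub>m n $$ (i, j)"
    proof (cases "i = j")
      case True
      have "ws ! i \<noteq> 0\<^sub>v n" using ws_orth[OF i i] by auto
      then show ?thesis using True i normalize_vec_unit[OF ws_nth[OF i]] by simp
    next
      case False
      then show ?thesis
        using i j ws_orth[OF j i] by (simp add: normalize_vec_cscalar_prod[OF ws_nth[OF j] ws_nth[OF i]])
    qed
    finally show "(mat_adjoint W * W) $$ (i, j) = 1\<^sub>m n $$ (i, j)" .
  qed (use W in auto)
  moreover have "col W 0 = v" using colW[OF n] v1 by (simp add: ws0 normalize_vec_unit_id)
  ultimately show ?thesis using W by (auto simp: unitary_def)
qed

lemma mat_adjoint_four_block_diag: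
  fixes A D :: "complex mat"
  assumes "A \<in> carrier_mat n1 n1" "D \<in> carrier_mat n2 n2"
  shows "mat_adjoint (four_block_mat A (0\<^sub>m n1 n2) (0\<^sub>m n2 n1) D)
    = four_block_mat (mat_adjoint A) (0\<^sub>m n1 n2) (0\<^sub>m n2 n1) (mat_adjoint D)"
  using assms by (intro eq_matI) (auto simp: carrier_matD)

lemma mult_four_block_diag:
  assumes "A1 \<in> carrier_mat n1 n1" "D1 \<in> carrier_mat n2 n2"
    "A2 \<in> carrier_mat n1 n1" "D2 \<in> carrier_mat n2 n2"
  shows "four_block_mat A1 (0\<^sub>m n1 n2) (0\<^sub>m n2 n1) D1 * four_block_mat A2 (0\<^sub>m n1 n2) (0\<^sub>m n2 n1) D2
    = four_block_mat (A1 * A2) (0\<^sub>m n1 n2) (0\<^sub>m n2 n1) (D1 * D2 :: 'a :: semiring_0 mat)"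
  using mult_four_block_mat[OF assms(1) zero_carrier_mat zero_carrier_mat assms(2)
      assms(3) zero_carrier_mat zero_carrier_mat assms(4)] assms by simp

lemma exists_unit_eigenvector:
  assumes A: "(A :: complex mat) \<in> carrier_mat (Suc m) (Suc m)"
  shows "\<exists>u e. u \<in> carrier_vec (Suc m) \<and> u \<bullet>c u = 1 \<and> A *\<^sub>v u = e \<cdot>\<^sub>v u"
proof -
  obtain e where "eigenvalue A e"
    using spectrum_non_empty[OF A] by (auto simp: spectrum_def)
  then obtain v where v: "v \<in> carrier_vec (Suc m)" "v \<noteq> 0\<^sub>v (Suc m)" "A *\<^sub>v v = e \<cdot>\<^sub>v v"
    using A by (auto simp: eigenvalue_def eigenvector_def)
  have "A *\<^sub>v normalize_vec v = e \<cdot>\<^sub>v normalize_vec v"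
    using A v unfolding normalize_vec_def by (simp add: mult_mat_vec smult_smult_assoc mult.commute)
  then show ?thesis using normalize_vec_unit[OF v(1,2)] normalize_vec_carrier[OF v(1)] by blast
qed

lemma index_mat_adjoint_mult_eigenvector:
  assumes W: "unitary n W" and A: "A \<in> carrier_mat n n" and n: "0 < n"
    and Aw: "A *\<^sub>v col W 0 = e \<cdot>\<^sub>v col W 0" and i: "i < n"
  shows "(mat_adjoint W * A * W) $$ (i, 0) = (if i = 0 then e else 0)"
proof -
  have Wc: "W \<in> carrier_mat n n" using W by (simp add: unitary_def)
  have W': "mat_adjoint W \<in> carrier_mat n n" using Wc by simp
  have "col (mat_adjoint W * A * W) 0 = mat_adjoint W *\<^sub>v col (A * W) 0"
    using A Wc col_mult2[OF W' mult_carrier_mat[OF A Wc] n] by (simp add: assoc_mult_mat[OF W' A Wc])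
  also have "col (A * W) 0 = e \<cdot>\<^sub>v col W 0" using col_mult2[OF A Wc n] Aw by simp
  also have "mat_adjoint W *\<^sub>v (e \<cdot>\<^sub>v col W 0) = e \<cdot>\<^sub>v col (mat_adjoint W * W) 0"
    using col_mult2[OF W' Wc n] mult_mat_vec[OF W' col_carrier_vec[OF n Wc]] by simp
  finally have "col (mat_adjoint W * A * W) 0 = e \<cdot>\<^sub>v col (1\<^sub>m n) 0"
    using W by (simp add: unitary_def)
  then have "col (mat_adjoint W * A * W) 0 $ i = (e \<cdot>\<^sub>v col (1\<^sub>m n) 0) $ i" by simp
  moreover have "mat_adjoint W * A * W \<in> carrier_mat n n"
    by (rule mult_carrier_mat[OF mult_carrier_mat[OF W' A] Wc])
  ultimately show ?thesis using i n carrier_matD[OF Wc] carrier_matD[OF A] by simp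
qed

lemma hermitian_four_block_first_column:
  assumes A: "A \<in> carrier_mat (Suc m) (Suc m)" and herm: "hermitian A"
    and col0: "\<And>i. i < Suc m \<Longrightarrow> A $$ (i, 0) = (if i = 0 then e else 0)"
  defines "B \<equiv> mat m m (\<lambda>(i, j). A $$ (Suc i, Suc j))"
  shows "A = four_block_mat (mat 1 1 (\<lambda>_. e)) (0\<^sub>m 1 m) (0\<^sub>m m 1) B" "hermitian B"
proof (rule eq_matI)
  fix i j assume "i < dim_row (four_block_mat (mat 1 1 (\<lambda>_. e)) (0\<^sub>m 1 m) (0\<^sub>m m 1) B)"
    "j < dim_col (four_block_mat (mat 1 1 (\<lambda>_. e)) (0\<^sub>m 1 m) (0\<^sub>m m 1) B)"
  then have i: "i < Suc m" and j: "j < Suc m" by (auto simp: B_def)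
  have "A $$ (0, j) = cnj (A $$ (j, 0))"
    using herm A j unfolding hermitian_def by (metis carrier_matD index_mat_adjoint zero_less_Suc)
  then show "A $$ (i, j) = four_block_mat (mat 1 1 (\<lambda>_. e)) (0\<^sub>m 1 m) (0\<^sub>m m 1) B $$ (i, j)"
    using i j col0 by (auto simp: B_def col0)
next
  show "hermitian B"
    unfolding hermitian_def
  proof (rule eq_matI)
    fix i j assume "i < dim_row B" "j < dim_col B"
    then have "i < m" "j < m" by (auto simp: B_def)
    then show "mat_adjoint B $$ (i, j) = B $$ (i, j)"
      using herm A index_mat_adjoint[of "Suc i" A "Suc j"] by (simp add: B_def hermitian_def)
  qed (auto simp: B_def)
qed (use A in \<open>auto simp: B_def\<close>)

lemma hermitian_deflation:
  assumes A: "A \<in> carrier_mat (Suc m) (Suc m)" and herm: "hermitian A"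
  shows "\<exists>W e B. unitary (Suc m) W \<and> B \<in> carrier_mat m m \<and> hermitian B \<and>
    mat_adjoint W * A * W = four_block_mat (mat 1 1 (\<lambda>_. e)) (0\<^sub>m 1 m) (0\<^sub>m m 1) B"
proof -
  obtain u e where u: "u \<in> carrier_vec (Suc m)" "u \<bullet>c u = 1" and Au: "A *\<^sub>v u = e \<cdot>\<^sub>v u"
    using exists_unit_eigenvector[OF A] by blast
  obtain W where W: "unitary (Suc m) W" "col W 0 = u"
    using unitary_completion[OF u] by blast
  have Wc: "W \<in> carrier_mat (Suc m) (Suc m)" using W by (simp add: unitary_def)
  have A': "mat_adjoint W * A * W \<in> carrier_mat (Suc m) (Suc m)"
    by (rule mult_carrier_mat[OF mult_carrier_mat[OF mat_adjoint_carrier[OF Wc] A] Wc])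
  note block = hermitian_four_block_first_column[OF A' hermitian_mult_adjoint[OF A Wc herm]
      index_mat_adjoint_mult_eigenvector[OF W(1) A zero_less_Suc Au[folded W(2)]]]
  show ?thesis
    using W(1) block
    by (intro exI[of _ W] exI[of _ e] exI[of _ "mat m m (\<lambda>(i, j). (mat_adjoint W * A * W) $$ (Suc i, Suc j))"])
      auto
qed

lemma unitary_four_block_one:
  assumes V: "unitary m V"
  shows "unitary (Suc m) (four_block_mat (1\<^sub>m 1) (0\<^sub>m 1 m) (0\<^sub>m m 1) V)"
proof -
  have Vc: "V \<in> carrier_mat m m" and VV: "mat_adjoint V * V = 1\<^sub>m m"
    using V by (auto simp: unitary_def)
  have "mat_adjoint (four_block_mat (1\<^sub>m 1) (0\<^sub>m 1 m) (0\<^sub>m m 1) V)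
      * four_block_mat (1\<^sub>m 1) (0\<^sub>m 1 m) (0\<^sub>m m 1) V
    = four_block_mat (1\<^sub>m 1) (0\<^sub>m 1 m) (0\<^sub>m m 1) (1\<^sub>m m)"
    unfolding mat_adjoint_four_block_diag[OF one_carrier_mat Vc] mat_adjoint_one
      mult_four_block_diag[OF one_carrier_mat mat_adjoint_carrier[OF Vc] one_carrier_mat Vc] VV
    by simp
  also have "\<dots> = 1\<^sub>m (Suc m)" by simp
  moreover have "four_block_mat (1\<^sub>m 1) (0\<^sub>m 1 m) (0\<^sub>m m 1) V \<in> carrier_mat (1 + m) (1 + m)"
    by (rule four_block_carrier_mat[OF one_carrier_mat Vc])
  ultimately show ?thesis by (simp add: unitary_def)
qed

lemma hermitian_unitary_diagonalization:
  assumes "A \<in> carrier_mat n n" "hermitian A"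
  shows "\<exists>U. unitary n U \<and> diagonal_mat (mat_adjoint U * A * U)"
  using assms
proof (induction n arbitrary: A)
  case 0
  then show ?case
    by (intro exI[of _ "1\<^sub>m 0"]) (auto simp: unitary_def diagonal_mat_def)
next
  case (Suc m A)
  obtain W e B where W: "unitary (Suc m) W" and B: "B \<in> carrier_mat m m" "hermitian B"
    and WAW: "mat_adjoint W * A * W = four_block_mat (mat 1 1 (\<lambda>_. e)) (0\<^sub>m 1 m) (0\<^sub>m m 1) B"
    using hermitian_deflation[OF Suc.prems] by blast
  obtain V where V: "unitary m V" and diag: "diagonal_mat (mat_adjoint V * B * V)"
    using Suc.IH[OF B] by blast
  define V' where "V' = four_block_mat (1\<^sub>m 1) (0\<^sub>m 1 m) (0\<^sub>m m 1) V"
  have V': "unitary (Suc m) V'" unfolding V'_def by (rule unitary_four_block_one[OF V])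
  have Wc: "W \<in> carrier_mat (Suc m) (Suc m)" and V'c: "V' \<in> carrier_mat (Suc m) (Suc m)"
    and Vc: "V \<in> carrier_mat m m"
    using W V' V by (auto simp: unitary_def)
  have "mat_adjoint (W * V') * A * (W * V') = mat_adjoint V' * (mat_adjoint W * A * W) * V'"
    using Wc V'c Suc.prems(1)
    by (simp add: mat_adjoint_mult[OF Wc V'c] assoc_mult_mat[of _ "Suc m" "Suc m" _ "Suc m" _ "Suc m"]
        mult_carrier_mat[of _ "Suc m" "Suc m" _ "Suc m"])
  also have "\<dots> = four_block_mat (mat 1 1 (\<lambda>_. e)) (0\<^sub>m 1 m) (0\<^sub>m m 1) (mat_adjoint V * B * V)"
    unfolding WAW V'_def mat_adjoint_four_block_diag[OF one_carrier_mat Vc] mat_adjoint_one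
      mult_four_block_diag[OF one_carrier_mat mat_adjoint_carrier[OF Vc] mat_carrier B(1)]
      mult_four_block_diag[OF mult_carrier_mat[OF one_carrier_mat mat_carrier]
        mult_carrier_mat[OF mat_adjoint_carrier[OF Vc] B(1)] one_carrier_mat Vc]
    by simp
  finally have "diagonal_mat (mat_adjoint (W * V') * A * (W * V'))"
    using diag B(1) Vc by (auto simp: diagonal_mat_def)
  then show ?case using unitary_mult[OF W V'] by blast
qed

lemma unitary_similarity_inverse:
  assumes U: "unitary n U" and A: "A \<in> carrier_mat n n"
  shows "U * (mat_adjoint U * A * U) * mat_adjoint U = A"
proof -
  have Uc: "U \<in> carrier_mat n n" and UU: "mat_adjoint U * U = 1\<^sub>m n"
    using U by (auto simp: unitary_def)
  have "U * (mat_adjoint U * A * U) * mat_adjoint U = (U * mat_adjoint U) * A * (U * mat_adjoint U)"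
    using Uc A by (simp add: assoc_mult_mat[of _ n n _ n _ n] mult_carrier_mat[of _ n n _ n])
  then show ?thesis using unitary_right_inverse[OF U] A by simp
qed

lemma unitary_similarity_mult:
  assumes U: "unitary n U" and S: "S \<in> carrier_mat n n" and T: "T \<in> carrier_mat n n"
  shows "(U * S * mat_adjoint U) * (U * T * mat_adjoint U) = U * (S * T) * mat_adjoint U"
proof -
  have Uc: "U \<in> carrier_mat n n" and UU: "mat_adjoint U * U = 1\<^sub>m n"
    using U by (auto simp: unitary_def)
  have "(U * S * mat_adjoint U) * (U * T * mat_adjoint U) = U * S * (mat_adjoint U * U) * T * mat_adjoint U"
    using Uc S T by (simp add: assoc_mult_mat[of _ n n _ n _ n] mult_carrier_mat[of _ n n _ n])
  then show ?thesis using Uc S T UU by (simp add: assoc_mult_mat[of _ n n _ n _ n])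
qed

section \<open>Square roots of positive operators\<close>

lemma positive_op_sqrt_exists:
  assumes P: "positive_op n A"
  shows "\<exists>B. positive_op n B \<and> B * B = A"
proof -
  have A: "A \<in> carrier_mat n n" using P by (simp add: positive_op_def)
  obtain U where U: "unitary n U" and diag: "diagonal_mat (mat_adjoint U * A * U)"
    using hermitian_unitary_diagonalization[OF A positive_op_hermitian[OF P]] by blast
  have Uc: "U \<in> carrier_mat n n" using U by (simp add: unitary_def)
  define D where "D = mat_adjoint U * A * U"
  have D: "positive_op n D" unfolding D_def by (rule positive_op_congruence[OF P Uc])
  have Dc: "D \<in> carrier_mat n n" using D by (simp add: positive_op_def)
  define d where "d i = Re (D $$ (i, i))" for i
  have d: "D $$ (i, i) = of_real (d i) \<and> 0 \<le> d i" if "i < n" for i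
    using positive_op_diagonal_nonneg[OF D that] by (auto simp: d_def less_eq_complex_def complex_eq_iff)
  define S :: "complex mat" where "S = mat_diag n (\<lambda>i. of_real (sqrt (d i)))"
  have S: "positive_op n S"
    unfolding S_def using d by (intro positive_op_mat_diag) (auto simp: less_eq_complex_def)
  have Sc: "S \<in> carrier_mat n n" by (simp add: S_def)
  have "S * S = mat_diag n (\<lambda>i. of_real (sqrt (d i)) * of_real (sqrt (d i)))"
    by (simp add: S_def)
  also have "\<dots> = mat_diag n (\<lambda>i. D $$ (i, i))"
    using d by (intro eq_matI) (auto simp: mat_diag_def simp flip: of_real_mult)
  also have "\<dots> = D" using diagonal_mat_eq_mat_diag[OF Dc diag[folded D_def]] by simp
  finally have "S * S = D" .
  then have "(U * S * mat_adjoint U) * (U * S * mat_adjoint U) = A"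
    using unitary_similarity_mult[OF U Sc Sc] unitary_similarity_inverse[OF U A] by (simp add: D_def)
  moreover have "positive_op n (U * S * mat_adjoint U)"
    using positive_op_congruence[OF S mat_adjoint_carrier[OF Uc]] by simp
  ultimately show ?thesis by blast
qed

lemma positive_op_qform_zero:
  assumes P: "positive_op n A" and v: "v \<in> carrier_vec n" and q: "qform n A v = 0"
  shows "A *\<^sub>v v = 0\<^sub>v n"
proof -
  obtain B where B: "positive_op n B" and BB: "B * B = A"
    using positive_op_sqrt_exists[OF P] by blast
  have Bc: "B \<in> carrier_mat n n" using B by (simp add: positive_op_def)
  have Bv: "B *\<^sub>v v \<in> carrier_vec n" using Bc v by simp
  have "qform n A v = (B *\<^sub>v v) \<bullet>c (B *\<^sub>v v)"
    using cscalar_prod_adjoint[OF Bc Bv v] positive_op_hermitian[OF B] Bc v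
    by (simp add: qform_eq_cscalar_prod[OF _ v] flip: BB) (simp add: hermitian_def)
  then have "B *\<^sub>v v = 0\<^sub>v n" using q Bv by simp
  then have "B *\<^sub>v (B *\<^sub>v v) = 0\<^sub>v n" using Bc by auto
  then show ?thesis using Bc v by (simp flip: BB)
qed

lemma unitary_diagonalization_eigenvector:
  assumes U: "unitary n U" and A: "A \<in> carrier_mat n n"
    and diag: "diagonal_mat (mat_adjoint U * A * U)" and i: "i < n"
  shows "A *\<^sub>v col U i = (mat_adjoint U * A * U) $$ (i, i) \<cdot>\<^sub>v col U i"
proof -
  have Uc: "U \<in> carrier_mat n n" using U by (simp add: unitary_def)
  define D where "D = mat_adjoint U * A * U"
  have Dc: "D \<in> carrier_mat n n" using Uc A by (simp add: D_def mult_carrier_mat[of _ n n _ n])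
  have "U * D = (U * mat_adjoint U) * A * U"
    using Uc A by (simp add: D_def assoc_mult_mat[of _ n n _ n _ n] mult_carrier_mat[of _ n n _ n])
  then have "A * U = U * D" using unitary_right_inverse[OF U] A by simp
  also have "mat_diag n (\<lambda>j. D $$ (j, j)) = D"
    using diagonal_mat_eq_mat_diag[OF Dc diag[folded D_def]] by (rule sym)
  then have "U * D = mat n n (\<lambda>(k, j). U $$ (k, j) * D $$ (j, j))"
    using mat_diag_mult_right[OF Uc, of "\<lambda>j. D $$ (j, j)"] by simp
  finally have AU: "A * U = mat n n (\<lambda>(k, j). U $$ (k, j) * D $$ (j, j))" .
  have "A *\<^sub>v col U i = col (A * U) i" using col_mult2[OF A Uc i] by simp
  also have "\<dots> = D $$ (i, i) \<cdot>\<^sub>v col U i"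
    using Uc i by (intro eq_vecI) (auto simp: AU mult.commute)
  finally show ?thesis by (simp add: D_def)
qed

text \<open>Uniqueness of the square root: for \<open>H = B - C\<close> one has \<open>H B + C H = B B - C C = 0\<close>, and on an
  eigenvector \<open>w\<close> of \<open>H\<close> with real eigenvalue \<open>e\<close> this reads
  \<open>e (\<langle>B w, w\<rangle> + \<langle>C w, w\<rangle>) = 0\<close>.\<close>

lemma positive_op_sqrt_difference_eigenvalue:
  assumes B: "positive_op n B" and C: "positive_op n C" and BC: "B * B = C * C"
    and w: "w \<in> carrier_vec n" "w \<noteq> 0\<^sub>v n" and Hw: "(B - C) *\<^sub>v w = e \<cdot>\<^sub>v w" and real: "cnj e = e"
  shows "e = 0"
proof (rule ccontr)
  assume e0: "e \<noteq> 0"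
  have Bc: "B \<in> carrier_mat n n" and Cc: "C \<in> carrier_mat n n"
    using B C by (auto simp: positive_op_def)
  have hB: "mat_adjoint B = B" and hC: "mat_adjoint C = C"
    using positive_op_hermitian[OF B] positive_op_hermitian[OF C] by (auto simp: hermitian_def)
  define H where "H = B - C"
  have Hc: "H \<in> carrier_mat n n" using Cc by (simp add: H_def minus_carrier_mat)
  have hH: "mat_adjoint H = H" using Bc Cc hB hC by (simp add: H_def mat_adjoint_minus)
  have Bw: "B *\<^sub>v w \<in> carrier_vec n" and Cw: "C *\<^sub>v w \<in> carrier_vec n" using Bc Cc w by auto
  have "H * B + C * H = 0\<^sub>m n n"
    using Bc Cc BC unfolding H_def
    by (simp add: minus_mult_distrib_mat[OF Bc Cc Bc] mult_minus_distrib_mat[OF Cc Bc Cc])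
      (intro eq_matI, auto)
  then have "(H * B + C * H) *\<^sub>v w = 0\<^sub>v n" using w by (intro eq_vecI) auto
  then have "0 = ((H * B + C * H) *\<^sub>v w) \<bullet>c w" using w by simp
  also have "\<dots> = (H *\<^sub>v (B *\<^sub>v w)) \<bullet>c w + (C *\<^sub>v (H *\<^sub>v w)) \<bullet>c w"
    using Hc Bc Cc w
    by (simp add: add_mult_distrib_mat_vec[of _ n n] add_scalar_prod_distrib[of _ n]
        mult_carrier_mat[of _ n n _ n])
  also have "(H *\<^sub>v (B *\<^sub>v w)) \<bullet>c w = e * qform n B w"
    using cscalar_prod_adjoint[OF Hc Bw w(1)] hH Hw real Bw w
    by (simp add: H_def qform_eq_cscalar_prod[OF Bc w(1)] conjugate_smult_vec)
  also have "(C *\<^sub>v (H *\<^sub>v w)) \<bullet>c w = e * qform n C w"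
    using Cc w Cw Hw by (simp add: H_def mult_mat_vec qform_eq_cscalar_prod[OF Cc w(1)])
  finally have "qform n B w + qform n C w = 0" using e0 by (metis distrib_left mult_eq_0_iff)
  then have "qform n B w = 0" "qform n C w = 0"
    using B C w by (auto simp: positive_op_iff add_nonneg_eq_0_iff)
  then have "(B - C) *\<^sub>v w = 0\<^sub>v n"
    using positive_op_qform_zero[OF B w(1)] positive_op_qform_zero[OF C w(1)] Bc Cc w
    by (simp add: minus_mult_distrib_mat_vec)
  then have "e \<cdot>\<^sub>v w = 0\<^sub>v n" using Hw by simp
  then have "(e \<cdot>\<^sub>v w) \<bullet>c w = 0" using w by simp
  then show False using e0 w by simp
qed

lemma positive_op_sqrt_unique:
  assumes B: "positive_op n B" and C: "positive_op n C" and BC: "B * B = C * C"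
  shows "B = C"
proof -
  have Bc: "B \<in> carrier_mat n n" and Cc: "C \<in> carrier_mat n n"
    using B C by (auto simp: positive_op_def)
  define H where "H = B - C"
  have Hc: "H \<in> carrier_mat n n" using Cc by (simp add: H_def minus_carrier_mat)
  have herm: "hermitian H"
    using positive_op_hermitian[OF B] positive_op_hermitian[OF C] Bc Cc
    by (simp add: hermitian_def H_def mat_adjoint_minus)
  obtain U where U: "unitary n U" and diag: "diagonal_mat (mat_adjoint U * H * U)"
    using hermitian_unitary_diagonalization[OF Hc herm] by blast
  have Uc: "U \<in> carrier_mat n n" using U by (simp add: unitary_def)
  define D where "D = mat_adjoint U * H * U"
  have Dc: "D \<in> carrier_mat n n" using Uc Hc by (simp add: D_def mult_carrier_mat[of _ n n _ n])
  have "D $$ (i, i) = 0" if i: "i < n" for i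
  proof (rule positive_op_sqrt_difference_eigenvalue[OF B C BC])
    show "col U i \<in> carrier_vec n" using Uc i by simp
    have "col U i \<bullet>c col U i = 1"
      using index_mat_adjoint_mult_self[OF Uc i i] U i by (simp add: unitary_def)
    then show "col U i \<noteq> 0\<^sub>v n" by auto
    show "(B - C) *\<^sub>v col U i = D $$ (i, i) \<cdot>\<^sub>v col U i"
      using unitary_diagonalization_eigenvector[OF U Hc diag i] by (simp add: D_def H_def)
    have "mat_adjoint D = D"
      using hermitian_mult_adjoint[OF Hc Uc herm] by (simp add: hermitian_def D_def)
    then show "cnj (D $$ (i, i)) = D $$ (i, i)" using index_mat_adjoint[of i D i] Dc i by simp
  qed
  then have "D = 0\<^sub>m n n"
    using diag[folded D_def] Dc by (intro eq_matI) (auto simp: diagonal_mat_def)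
  then have "H = 0\<^sub>m n n"
    using unitary_similarity_inverse[OF U Hc] Uc by (simp add: D_def)
  show ?thesis
  proof (rule eq_matI)
    fix i j assume "i < dim_row C" "j < dim_col C"
    moreover from \<open>H = 0\<^sub>m n n\<close> have "H $$ (i, j) = 0\<^sub>m n n $$ (i, j)" by simp
    ultimately show "B $$ (i, j) = C $$ (i, j)" using Bc Cc by (simp add: H_def)
  qed (use Bc Cc in auto)
qed

lemma psd_sqrt:
  assumes "positive_op d A"
  shows "positive_op d (psd_sqrt d A)" "psd_sqrt d A * psd_sqrt d A = A"
proof -
  have "\<exists>!B. positive_op d B \<and> B * B = A"
    using positive_op_sqrt_exists[OF assms] positive_op_sqrt_unique by metis
  then have "positive_op d (psd_sqrt d A) \<and> psd_sqrt d A * psd_sqrt d A = A"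
    unfolding psd_sqrt_def by (rule theI')
  then show "positive_op d (psd_sqrt d A)" "psd_sqrt d A * psd_sqrt d A = A" by auto
qed

section \<open>Tensor products and the partial trace\<close>

lemma sum_lessThan_mult:
  "(\<Sum>p<(a::nat) * b. f p) = (\<Sum>i<a. \<Sum>c<b. f (i * b + c))"
proof -
  have "(\<Sum>c<b. f (i * b + c)) = sum f {i * b..<i * b + b}" for i
    using sum.shift_bounds_nat_ivl[of f 0 "i * b" b] by (simp add: atLeast0LessThan add.commute)
  then show ?thesis by (simp add: sum.nat_group)
qed

lemma div_mod_less_mult:
  assumes "p < d * (N::nat)"
  shows "p div N < d" "p mod N < N"
  using assms by (auto simp: less_mult_imp_div_less intro!: mod_less_divisor Nat.gr0I)

lemma index_mult_add_less:
  assumes "i < a" "c < (b::nat)"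
  shows "i * b + c < a * b"
proof -
  have "i * b + c < Suc i * b" using assms(2) by simp
  also have "\<dots> \<le> a * b" using assms(1) by (intro mult_le_mono1) simp
  finally show ?thesis .
qed

lemma dim_kron [simp]:
  "dim_row (kron A B) = dim_row A * dim_row B" "dim_col (kron A B) = dim_col A * dim_col B"
  by (simp_all add: kron_def)

lemma kron_carrier [simp]:
  "A \<in> carrier_mat a a' \<Longrightarrow> B \<in> carrier_mat b b' \<Longrightarrow> kron A B \<in> carrier_mat (a * b) (a' * b')"
  by (simp add: kron_def)

lemma index_kron:
  assumes "A \<in> carrier_mat a a'" "B \<in> carrier_mat b b'"
    "i < a" "j < a'" "c < b" "e < b'"
  shows "kron A B $$ (i * b + c, j * b' + e) = A $$ (i, j) * B $$ (c, e)"
  using assms by (simp add: kron_def index_mult_add_less)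

lemma kron_one_one: "kron (1\<^sub>m a) (1\<^sub>m b) = (1\<^sub>m (a * b) :: complex mat)"
proof (rule eq_matI)
  fix p q assume "p < dim_row (1\<^sub>m (a * b))" "q < dim_col (1\<^sub>m (a * b) :: complex mat)"
  then have "p < a * b" "q < a * b" by auto
  moreover have "0 < b" using \<open>p < a * b\<close> by (cases b) auto
  moreover have "p = q \<longleftrightarrow> p div b = q div b \<and> p mod b = q mod b"
    by (metis div_mult_mod_eq)
  ultimately show "kron (1\<^sub>m a) (1\<^sub>m b) $$ (p, q) = 1\<^sub>m (a * b) $$ (p, q)"
    by (auto simp: kron_def less_mult_imp_div_less)
qed (auto simp: kron_def)

definition kron_vec :: "complex vec \<Rightarrow> complex vec \<Rightarrow> complex vec" where
  "kron_vec u w = vec (dim_vec u * dim_vec w) (\<lambda>p. u $ (p div dim_vec w) * w $ (p mod dim_vec w))"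

lemma kron_vec_carrier [simp]:
  "u \<in> carrier_vec a \<Longrightarrow> w \<in> carrier_vec b \<Longrightarrow> kron_vec u w \<in> carrier_vec (a * b)"
  by (simp add: kron_vec_def)

lemma index_kron_vec:
  "u \<in> carrier_vec a \<Longrightarrow> w \<in> carrier_vec b \<Longrightarrow> i < a \<Longrightarrow> c < b \<Longrightarrow>
    kron_vec u w $ (i * b + c) = u $ i * w $ c"
  by (simp add: kron_vec_def index_mult_add_less)

lemma kron_vec_nonzero:
  assumes u: "u \<in> carrier_vec a" "u \<noteq> 0\<^sub>v a" and w: "w \<in> carrier_vec b" "w \<noteq> 0\<^sub>v b"
  shows "kron_vec u w \<noteq> 0\<^sub>v (a * b)"
proof -
  obtain i c where "i < a" "u $ i \<noteq> 0" "c < b" "w $ c \<noteq> 0"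
    using u w by (metis carrier_vecD eq_vecI index_zero_vec)
  then show ?thesis
    using index_kron_vec[OF u(1) w(1)] index_mult_add_less by (metis index_zero_vec(1) mult_eq_0_iff)
qed

lemma qform_kron_vec:
  assumes u: "u \<in> carrier_vec dS" and r: "r \<in> carrier_vec dA"
  shows "qform (dS * dA) \<sigma> (kron_vec u r) = (\<Sum>i<dS. \<Sum>j<dS. \<Sum>b<dA. \<Sum>c<dA.
    cnj (u $ i * r $ c) * \<sigma> $$ (i * dA + c, j * dA + b) * (u $ j * r $ b))"
proof -
  have "qform (dS * dA) \<sigma> (kron_vec u r) = (\<Sum>i<dS. \<Sum>c<dA. \<Sum>j<dS. \<Sum>b<dA.
      cnj (u $ i * r $ c) * \<sigma> $$ (i * dA + c, j * dA + b) * (u $ j * r $ b))"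
    using u r by (simp add: qform_def sum_lessThan_mult index_kron_vec)
  also have "\<dots> = (\<Sum>i<dS. \<Sum>j<dS. \<Sum>c<dA. \<Sum>b<dA.
      cnj (u $ i * r $ c) * \<sigma> $$ (i * dA + c, j * dA + b) * (u $ j * r $ b))"
    by (rule sum.cong[OF refl], rule sum.swap)
  also have "\<dots> = (\<Sum>i<dS. \<Sum>j<dS. \<Sum>b<dA. \<Sum>c<dA.
      cnj (u $ i * r $ c) * \<sigma> $$ (i * dA + c, j * dA + b) * (u $ j * r $ b))"
    by (rule sum.cong[OF refl], rule sum.cong[OF refl], rule sum.swap)
  finally show ?thesis .
qed

lemma ptrace2_carrier [simp]:
  "ptrace2 a b M \<in> carrier_mat a a" "dim_row (ptrace2 a b M) = a" "dim_col (ptrace2 a b M) = a"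
  by (simp_all add: ptrace2_def)

lemma ptrace2_add:
  "A \<in> carrier_mat (a * b) (a * b) \<Longrightarrow> B \<in> carrier_mat (a * b) (a * b) \<Longrightarrow>
    ptrace2 a b (A + B) = ptrace2 a b A + ptrace2 a b B"
  by (rule eq_matI) (auto simp: ptrace2_def index_mult_add_less sum.distrib)

lemma ptrace2_smult:
  "A \<in> carrier_mat (a * b) (a * b) \<Longrightarrow> ptrace2 a b (c \<cdot>\<^sub>m A) = c \<cdot>\<^sub>m ptrace2 a b A"
  by (rule eq_matI) (auto simp: ptrace2_def index_mult_add_less sum_distrib_left)

lemma ptrace2_kron:
  assumes \<rho>: "\<rho> \<in> carrier_mat dS dS" and \<xi>: "\<xi> \<in> carrier_mat N N"
  shows "ptrace2 dS N (kron \<rho> \<xi>) = mtrace \<xi> \<cdot>\<^sub>m \<rho>"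
  using assms
  by (intro eq_matI) (auto simp: ptrace2_def index_kron[OF \<rho> \<xi>] mtrace_def sum_distrib_left mult.commute)

lemma mtrace_ptrace2:
  "M \<in> carrier_mat (a * b) (a * b) \<Longrightarrow> mtrace (ptrace2 a b M) = mtrace M"
  by (simp add: mtrace_def ptrace2_def sum_lessThan_mult)

lemma index_ptrace_pointer:
  assumes \<sigma>: "\<sigma> \<in> carrier_mat (dS * dA) (dS * dA)" and Z: "Z \<in> carrier_mat dA dA"
    and i: "i < dS" and j: "j < dS"
  shows "ptrace2 dS dA (kron (1\<^sub>m dS) Z * \<sigma>) $$ (i, j)
    = (\<Sum>b<dA. \<Sum>c<dA. Z $$ (b, c) * \<sigma> $$ (i * dA + c, j * dA + b))"
proof -
  have K: "kron (1\<^sub>m dS) Z \<in> carrier_mat (dS * dA) (dS * dA)" using Z by simp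
  have "(kron (1\<^sub>m dS) Z * \<sigma>) $$ (i * dA + b, j * dA + b)
      = (\<Sum>c<dA. Z $$ (b, c) * \<sigma> $$ (i * dA + c, j * dA + b))" if b: "b < dA" for b
  proof -
    have "(kron (1\<^sub>m dS) Z * \<sigma>) $$ (i * dA + b, j * dA + b) = (\<Sum>i'<dS. \<Sum>c<dA.
        kron (1\<^sub>m dS) Z $$ (i * dA + b, i' * dA + c) * \<sigma> $$ (i' * dA + c, j * dA + b))"
      using i j b by (simp add: index_mult_mat_sum[OF K \<sigma>] index_mult_add_less sum_lessThan_mult)
    also have "\<dots> = (\<Sum>i'<dS. if i' = i
        then (\<Sum>c<dA. Z $$ (b, c) * \<sigma> $$ (i' * dA + c, j * dA + b)) else 0)"
      using i b by (intro sum.cong refl) (auto simp: index_kron[OF one_carrier_mat Z])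
    finally show ?thesis using i by simp
  qed
  then show ?thesis using i j by (simp add: ptrace2_def)
qed

lemma ptrace2_kron_zero:
  assumes "\<sigma> \<in> carrier_mat (dS * dA) (dS * dA)"
  shows "ptrace2 dS dA (kron (1\<^sub>m dS) (0\<^sub>m dA dA) * \<sigma>) = 0\<^sub>m dS dS"
  by (rule eq_matI) (auto simp: index_ptrace_pointer[OF assms zero_carrier_mat])

lemma qform_ptrace_pointer:
  assumes \<sigma>: "\<sigma> \<in> carrier_mat (dS * dA) (dS * dA)" and R: "R \<in> carrier_mat dA dA"
    and u: "u \<in> carrier_vec dS"
  shows "qform dS (ptrace2 dS dA (kron (1\<^sub>m dS) (R * mat_adjoint R) * \<sigma>)) u
    = (\<Sum>e<dA. qform (dS * dA) \<sigma> (kron_vec u (col R e)))"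
proof -
  have Z: "R * mat_adjoint R \<in> carrier_mat dA dA" using R by simp
  define T where "T i j b c e =
    cnj (u $ i * R $$ (c, e)) * \<sigma> $$ (i * dA + c, j * dA + b) * (u $ j * R $$ (b, e))" for i j b c e
  have "qform dS (ptrace2 dS dA (kron (1\<^sub>m dS) (R * mat_adjoint R) * \<sigma>)) u
      = (\<Sum>i<dS. \<Sum>j<dS. \<Sum>b<dA. \<Sum>c<dA. \<Sum>e<dA. T i j b c e)"
    using R by (simp add: qform_def index_ptrace_pointer[OF \<sigma> Z]
        index_mult_mat_sum[OF R mat_adjoint_carrier[OF R]] T_def sum_distrib_left sum_distrib_right mult_ac
        del: index_mult_mat)
  also have "\<dots> = (\<Sum>i<dS. \<Sum>j<dS. \<Sum>b<dA. \<Sum>e<dA. \<Sum>c<dA. T i j b c e)"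
    by (rule sum.cong[OF refl], rule sum.cong[OF refl], rule sum.cong[OF refl], rule sum.swap)
  also have "\<dots> = (\<Sum>i<dS. \<Sum>j<dS. \<Sum>e<dA. \<Sum>b<dA. \<Sum>c<dA. T i j b c e)"
    by (rule sum.cong[OF refl], rule sum.cong[OF refl], rule sum.swap)
  also have "\<dots> = (\<Sum>i<dS. \<Sum>e<dA. \<Sum>j<dS. \<Sum>b<dA. \<Sum>c<dA. T i j b c e)"
    by (rule sum.cong[OF refl], rule sum.swap)
  also have "\<dots> = (\<Sum>e<dA. \<Sum>i<dS. \<Sum>j<dS. \<Sum>b<dA. \<Sum>c<dA. T i j b c e)"
    by (rule sum.swap)
  also have "\<dots> = (\<Sum>e<dA. qform (dS * dA) \<sigma> (kron_vec u (col R e)))"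
    using u R by (simp add: qform_kron_vec T_def)
  finally show ?thesis .
qed

lemma pos_def_op_ptrace_pointer:
  assumes \<sigma>: "pos_def_op (dS * dA) \<sigma>" and Z: "positive_op dA Z" and Z0: "Z \<noteq> 0\<^sub>m dA dA"
  shows "pos_def_op dS (ptrace2 dS dA (kron (1\<^sub>m dS) Z * \<sigma>))"
  unfolding pos_def_op_iff
proof (intro conjI ballI impI)
  show "ptrace2 dS dA (kron (1\<^sub>m dS) Z * \<sigma>) \<in> carrier_mat dS dS" by (simp add: ptrace2_def)
  fix u :: "complex vec" assume u: "u \<in> carrier_vec dS" "u \<noteq> 0\<^sub>v dS"
  have \<sigma>c: "\<sigma> \<in> carrier_mat (dS * dA) (dS * dA)" using \<sigma> by (simp add: pos_def_op_def)
  define R where "R = psd_sqrt dA Z"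
  have R: "positive_op dA R" "R * R = Z" using psd_sqrt[OF Z] by (simp_all add: R_def)
  have Rc: "R \<in> carrier_mat dA dA" using R(1) by (simp add: positive_op_def)
  have RR: "R * mat_adjoint R = Z"
    using R positive_op_hermitian[OF R(1)] by (simp add: hermitian_def)
  have "R \<noteq> 0\<^sub>m dA dA"
  proof
    assume "R = 0\<^sub>m dA dA"
    then have "Z = 0\<^sub>m dA dA" using R(2) by (metis left_mult_zero_mat zero_carrier_mat)
    then show False using Z0 by simp
  qed
  then obtain b e where b: "b < dA" and e: "e < dA" and "R $$ (b, e) \<noteq> 0"
    using Rc by (metis carrier_matD eq_matI index_zero_mat(1,2,3))
  then have "col R e $ b \<noteq> 0" using Rc by simp
  then have col: "col R e \<noteq> 0\<^sub>v dA" using b by auto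
  have "col R e' \<in> carrier_vec dA" for e' using Rc by (metis carrier_matD(1) col_dim)
  then have terms: "0 \<le> qform (dS * dA) \<sigma> (kron_vec u (col R e'))" for e'
    using pos_def_op_imp_positive_op[OF \<sigma>] u by (simp add: positive_op_iff)
  have "0 < qform (dS * dA) \<sigma> (kron_vec u (col R e))"
    using \<sigma> u Rc e col kron_vec_nonzero[OF u _ col] by (simp add: pos_def_op_iff)
  then show "0 < qform dS (ptrace2 dS dA (kron (1\<^sub>m dS) Z * \<sigma>)) u"
    using qform_ptrace_pointer[OF \<sigma>c Rc u(1)] e terms by (simp add: RR sum_pos2)
qed

lemma pos_def_op_ptrace2:
  assumes \<sigma>: "pos_def_op (dS * N) \<sigma>" and N: "0 < N"
  shows "pos_def_op dS (ptrace2 dS N \<sigma>)"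
proof -
  have "1\<^sub>m N \<noteq> (0\<^sub>m N N :: complex mat)" using N by (metis index_one_mat(1) index_zero_mat(1) zero_neq_one)
  moreover have "positive_op N (1\<^sub>m N)"
    using positive_op_mat_diag[of N "\<lambda>_. 1"] by (simp add: less_eq_complex_def)
  ultimately have "pos_def_op dS (ptrace2 dS N (kron (1\<^sub>m dS) (1\<^sub>m N) * \<sigma>))"
    using pos_def_op_ptrace_pointer[OF \<sigma>] by blast
  moreover have "1\<^sub>m (dS * N) * \<sigma> = \<sigma>"
    using \<sigma> left_mult_one_mat[of \<sigma> "dS * N" "dS * N"] by (simp add: pos_def_op_def)
  ultimately show ?thesis by (simp add: kron_one_one)
qed

definition maximally_mixed :: "nat \<Rightarrow> complex mat" where
  "maximally_mixed d = (1 / of_nat d) \<cdot>\<^sub>m 1\<^sub>m d"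

lemma maximally_mixed_carrier [simp]:
  "maximally_mixed d \<in> carrier_mat d d"
  "dim_row (maximally_mixed d) = d" "dim_col (maximally_mixed d) = d"
  by (simp_all add: maximally_mixed_def)

lemma mtrace_maximally_mixed: "0 < d \<Longrightarrow> mtrace (maximally_mixed d) = 1"
  by (simp add: maximally_mixed_def mtrace_def)

lemma full_rank_state_maximally_mixed:
  assumes "0 < d"
  shows "full_rank_state d (maximally_mixed d)"
proof -
  have "pos_def_op d (maximally_mixed d)"
    unfolding pos_def_op_iff
  proof (intro conjI ballI impI maximally_mixed_carrier)
    fix v :: "complex vec" assume "v \<in> carrier_vec d" "v \<noteq> 0\<^sub>v d"
    then have "0 < v \<bullet>c v" by simp
    then show "0 < qform d (maximally_mixed d) v"
      using assms unfolding maximally_mixed_def qform_smult[OF one_carrier_mat]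
        qform_eq_cscalar_prod[OF one_carrier_mat \<open>v \<in> carrier_vec d\<close>]
      using \<open>v \<in> carrier_vec d\<close> by (simp add: less_complex_def)
  qed
  then show ?thesis
    using assms pos_def_op_imp_positive_op
    by (simp add: full_rank_state_def is_state_def mtrace_maximally_mixed)
qed

lemma index_kron_maximally_mixed:
  assumes "\<xi> \<in> carrier_mat dA dA" "i < dS" "j < dS" "a < dA" "b < dA"
  shows "kron (maximally_mixed dS) \<xi> $$ (i * dA + a, j * dA + b)
    = (if i = j then \<xi> $$ (a, b) / of_nat dS else 0)"
  using index_kron[OF maximally_mixed_carrier(1) assms] assms by (simp add: maximally_mixed_def)

lemma qform_kron_maximally_mixed:
  assumes \<xi>: "\<xi> \<in> carrier_mat dA dA"
  shows "qform (dS * dA) (kron (maximally_mixed dS) \<xi>) v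
    = (\<Sum>i<dS. qform dA \<xi> (vec dA (\<lambda>a. v $ (i * dA + a)))) / of_nat dS"
proof -
  have "qform (dS * dA) (kron (maximally_mixed dS) \<xi>) v = (\<Sum>i<dS. \<Sum>a<dA. \<Sum>j<dS. \<Sum>b<dA.
      if i = j then cnj (v $ (i * dA + a)) * (\<xi> $$ (a, b) / of_nat dS) * v $ (j * dA + b) else 0)"
    by (auto simp: qform_def sum_lessThan_mult index_kron_maximally_mixed[OF \<xi>] intro!: sum.cong)
  then show ?thesis
    by (simp add: sum.swap[where A = "{..<dS}" and B = "{..<dA}"] qform_def sum_divide_distrib)
qed

lemma mtrace_kron_maximally_mixed:
  assumes dS: "0 < dS" and \<xi>: "\<xi> \<in> carrier_mat dA dA"
  shows "mtrace (kron (maximally_mixed dS) \<xi>) = mtrace \<xi>"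
  using dS carrier_matD[OF \<xi>]
  by (simp add: mtrace_def sum_lessThan_mult index_kron_maximally_mixed[OF \<xi>] flip: sum_divide_distrib)

lemma pos_def_op_kron_maximally_mixed:
  assumes dS: "0 < dS" and \<xi>: "pos_def_op dA \<xi>"
  shows "pos_def_op (dS * dA) (kron (maximally_mixed dS) \<xi>)"
  unfolding pos_def_op_iff
proof (intro conjI ballI impI)
  have \<xi>c: "\<xi> \<in> carrier_mat dA dA" using \<xi> by (simp add: pos_def_op_def)
  then show "kron (maximally_mixed dS) \<xi> \<in> carrier_mat (dS * dA) (dS * dA)" by simp
  define w where "w v i = vec dA (\<lambda>a. v $ (i * dA + a))" for v :: "complex vec" and i
  fix v :: "complex vec" assume v: "v \<in> carrier_vec (dS * dA)" "v \<noteq> 0\<^sub>v (dS * dA)"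
  then obtain p where p: "p < dS * dA" "v $ p \<noteq> 0" by (metis carrier_vecD eq_vecI index_zero_vec)
  note p_bounds = div_mod_less_mult[OF p(1)]
  have "w v (p div dA) $ (p mod dA) \<noteq> 0" using p p_bounds by (simp add: w_def)
  then have "w v (p div dA) \<noteq> 0\<^sub>v dA" using p_bounds by (metis index_zero_vec(1))
  then have "0 < qform dA \<xi> (w v (p div dA))" using \<xi> by (simp add: pos_def_op_iff w_def)
  moreover have "0 \<le> qform dA \<xi> (w v i)" for i
    using pos_def_op_imp_positive_op[OF \<xi>] by (simp add: positive_op_iff w_def)
  ultimately have "0 < (\<Sum>i<dS. qform dA \<xi> (w v i))"
    using p_bounds by (intro sum_pos2[of _ "p div dA"]) auto
  then show "0 < qform (dS * dA) (kron (maximally_mixed dS) \<xi>) v"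
    using dS by (simp add: qform_kron_maximally_mixed[OF \<xi>c] w_def less_complex_def)
qed

lemma full_rank_state_kron_maximally_mixed:
  assumes dS: "0 < dS" and \<xi>: "full_rank_state dA \<xi>"
  shows "full_rank_state (dS * dA) (kron (maximally_mixed dS) \<xi>)"
proof -
  have \<xi>c: "\<xi> \<in> carrier_mat dA dA" and \<xi>pd: "pos_def_op dA \<xi>" and tr: "mtrace \<xi> = 1"
    using \<xi> by (auto simp: full_rank_state_def is_state_def positive_op_def)
  show ?thesis
    using pos_def_op_kron_maximally_mixed[OF dS \<xi>pd] mtrace_kron_maximally_mixed[OF dS \<xi>c] tr
      pos_def_op_imp_positive_op by (simp add: full_rank_state_def is_state_def)
qed

lemma mtrace_mult:
  assumes "A \<in> carrier_mat n m" "B \<in> carrier_mat m n"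
  shows "mtrace (A * B) = (\<Sum>i<n. \<Sum>l<m. A $$ (i, l) * B $$ (l, i))"
proof -
  have "dim_row (A * B) = n" using assms by simp
  then show ?thesis
    using assms by (simp add: mtrace_def index_mult_mat_sum[OF assms] del: index_mult_mat)
qed

lemma mtrace_mult_commute:
  assumes "A \<in> carrier_mat n m" "B \<in> carrier_mat m n"
  shows "mtrace (A * B) = mtrace (B * A)"
  unfolding mtrace_mult[OF assms] mtrace_mult[OF assms(2,1)]
  by (subst sum.swap) (simp add: mult.commute)

lemma index_block [simp]: "a < n \<Longrightarrow> b < n \<Longrightarrow> block n X P Q $$ (a, b) = X $$ (P * n + a, Q * n + b)"
  by (simp add: block_def)

lemma completely_positive_kraus:
  assumes J: "finite J" and V: "\<And>j. j \<in> J \<Longrightarrow> V j \<in> carrier_mat m n"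
    and kraus: "\<And>M. M \<in> carrier_mat n n \<Longrightarrow> \<Phi> M = msum m J (\<lambda>j. V j * M * mat_adjoint (V j))"
  shows "completely_positive n m \<Phi>"
  unfolding completely_positive_def
proof (intro allI impI)
  fix k X assume X: "positive_op (k * n) X"
  have kraus_index: "\<Phi> M $$ (s, t) = (\<Sum>j\<in>J. \<Sum>a<n. \<Sum>b<n. V j $$ (s, a) * M $$ (a, b) * cnj (V j $$ (t, b)))"
    if "M \<in> carrier_mat n n" "s < m" "t < m" for M s t
    using that by (simp add: kraus msum_def) (intro sum.cong refl index_mult_mult_adjoint[OF V], auto)
  define w where "w v j = vec (k * n)
    (\<lambda>r. \<Sum>s<m. cnj (V j $$ (s, r mod n)) * v $ (r div n * m + s))" for v :: "complex vec" and j
  have blk: "block n X P Q \<in> carrier_mat n n" for P Q by (simp add: block_def)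
  have qform_ampl: "qform (k * m) (ampl k n m \<Phi> X) v = (\<Sum>j\<in>J. qform (k * n) X (w v j))" for v
  proof -
    define T where "T j P s Q t a b = cnj (v $ (P * m + s)) * V j $$ (s, a) * X $$ (P * n + a, Q * n + b) *
      cnj (V j $$ (t, b)) * v $ (Q * m + t)" for j P s Q t a b
    have "qform (k * m) (ampl k n m \<Phi> X) v =
        (\<Sum>P<k. \<Sum>s<m. \<Sum>Q<k. \<Sum>t<m. \<Sum>j\<in>J. \<Sum>a<n. \<Sum>b<n. T j P s Q t a b)"
      by (simp add: qform_def sum_lessThan_mult ampl_def index_mult_add_less kraus_index[OF blk] T_def
          sum_distrib_left sum_distrib_right mult_ac)
    \<comment> \<open>the oriented swaps move the \<open>J\<close>-sum outwards, then the \<open>k\<close>-, \<open>m\<close>- and \<open>n\<close>-sums,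
      so both sides reach the same normal form\<close>
    also have "\<dots> = (\<Sum>j\<in>J. \<Sum>P<k. \<Sum>a<n. \<Sum>Q<k. \<Sum>b<n. \<Sum>s<m. \<Sum>t<m. T j P s Q t a b)"
      by (simp only: sum.swap[where B = J] sum.swap[where A = "{..<m}" and B = "{..<k}"]
          sum.swap[where A = "{..<n}" and B = "{..<k}"] sum.swap[where A = "{..<n}" and B = "{..<m}"])
    also have "\<dots> = (\<Sum>j\<in>J. qform (k * n) X (w v j))"
      by (simp add: qform_def sum_lessThan_mult w_def index_mult_add_less T_def cnj_sum
          sum_distrib_left sum_distrib_right mult_ac)
    finally show ?thesis .
  qed
  show "positive_op (k * m) (ampl k n m \<Phi> X)"
    unfolding positive_op_iff
  proof (intro conjI ballI)
    show "ampl k n m \<Phi> X \<in> carrier_mat (k * m) (k * m)" by (simp add: ampl_def)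
    fix v :: "complex vec"
    have "0 \<le> qform (k * n) X (w v j)" for j using X by (simp add: positive_op_iff w_def)
    then show "0 \<le> qform (k * m) (ampl k n m \<Phi> X) v" by (simp add: qform_ampl sum_nonneg)
  qed
qed

section \<open>Necessity of complete unsharpness\<close>

lemma observable_effect:
  assumes "observable d X E" "x \<in> X"
  shows "E x \<in> carrier_mat d d" "positive_op d (E x)" "E x \<noteq> 0\<^sub>m d d"
  using assms by (auto simp: observable_def positive_op_def)

lemma observable_other_outcome:
  assumes obs: "observable d X E" and nt: "nontrivial_obs d X E" and x: "x \<in> X"
  shows "\<exists>y \<in> X. y \<noteq> x"
proof (rule ccontr)
  assume "\<not> ?thesis"
  then have X: "X = {x}" using x by blast
  have "E x = msum d X E"
    using observable_effect(1)[OF obs x] by (intro eq_matI) (auto simp: X msum_def)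
  also have "\<dots> = 1 \<cdot>\<^sub>m 1\<^sub>m d" using obs by (simp add: observable_def) (rule eq_matI, auto)
  finally show False using nt by (auto simp: nontrivial_obs_def X)
qed

lemma observable_eigenvector_one:
  assumes obs: "observable d X E" and x: "x \<in> X" and y: "y \<in> X" "y \<noteq> x"
    and u: "u \<in> carrier_vec d" and Eu: "E x *\<^sub>v u = u"
  shows "E y *\<^sub>v u = 0\<^sub>v d"
proof -
  have fin: "finite X" using obs by (simp add: observable_def)
  note eff = observable_effect[OF obs]
  have nonneg: "0 \<le> qform d (E z) u" if "z \<in> X" for z
    using eff(2)[OF that] u by (simp add: positive_op_iff)
  have "u \<bullet>c u = qform d (msum d X E) u"
    using obs u by (simp add: observable_def qform_eq_cscalar_prod)
  also have "\<dots> = qform d (E x) u + (\<Sum>z\<in>X - {x}. qform d (E z) u)"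
    using fin x eff(1) by (simp add: qform_msum sum.remove)
  also have "qform d (E x) u = u \<bullet>c u"
    using Eu u eff(1)[OF x] by (simp add: qform_eq_cscalar_prod)
  finally have "(\<Sum>z\<in>X - {x}. qform d (E z) u) = 0" by simp
  then have "qform d (E y) u = 0"
    using fin y nonneg by (subst (asm) sum_nonneg_eq_0_iff) auto
  then show ?thesis using positive_op_qform_zero[OF eff(2)[OF y(1)] u] by simp
qed

lemma lueders_maximally_mixed:
  assumes "positive_op d (E x)"
  shows "lueders d E x (maximally_mixed d) = (1 / of_nat d) \<cdot>\<^sub>m E x"
proof -
  have K: "psd_sqrt d (E x) \<in> carrier_mat d d"
    using psd_sqrt(1)[OF assms] by (simp add: positive_op_def)
  then show ?thesis
    using psd_sqrt(2)[OF assms]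
    by (simp add: lueders_def maximally_mixed_def mult_smult_distrib[OF K one_carrier_mat]
        mult_smult_assoc_mat[OF K K])
qed

lemma pos_def_op_scale_inverse:
  assumes "pos_def_op d ((1 / of_nat n) \<cdot>\<^sub>m A)" "0 < n"
  shows "pos_def_op d A"
proof -
  have "(1 / of_nat n) \<cdot>\<^sub>m A \<in> carrier_mat d d" using assms(1) by (simp add: pos_def_op_def)
  then have A: "A \<in> carrier_mat d d" by (metis carrier_matD carrier_matI index_smult_mat(2,3))
  show ?thesis
    unfolding pos_def_op_iff
  proof (intro conjI ballI impI A)
    fix v :: "complex vec" assume "v \<in> carrier_vec d" "v \<noteq> 0\<^sub>v d"
    then have "0 < (1 / of_nat n) * qform d A v"
      using assms(1) by (simp add: pos_def_op_iff qform_smult[OF A])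
    then show "0 < qform d A v" using assms(2) by (simp add: less_complex_def zero_less_divide_iff)
  qed
qed

lemma third_law_lueders_pos_def:
  assumes dS: "0 < dS" and obs: "observable dS X E"
    and sch: "third_law_scheme dS X dA \<xi> \<Phi> Z"
    and impl: "\<forall>x \<in> X. \<forall>\<rho> \<in> carrier_mat dS dS.
      scheme_instrument dS dA \<xi> \<Phi> Z x \<rho> = lueders dS E x \<rho>"
    and x: "x \<in> X"
  shows "pos_def_op dS (E x)"
proof -
  have \<xi>: "full_rank_state dA \<xi>" and \<Phi>: "third_law_channel (dS * dA) (dS * dA) \<Phi>"
    and Zx: "positive_op dA (Z x)"
    using sch x by (auto simp: third_law_scheme_def measurement_scheme_def)
  define \<sigma> where "\<sigma> = \<Phi> (kron (maximally_mixed dS) \<xi>)"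
  have \<sigma>: "pos_def_op (dS * dA) \<sigma>"
    using \<Phi> full_rank_state_kron_maximally_mixed[OF dS \<xi>]
    by (simp add: \<sigma>_def third_law_channel_def full_rank_state_def)
  have \<sigma>c: "\<sigma> \<in> carrier_mat (dS * dA) (dS * dA)" using \<sigma> by (simp add: pos_def_op_def)
  have out: "ptrace2 dS dA (kron (1\<^sub>m dS) (Z x) * \<sigma>) = (1 / of_nat dS) \<cdot>\<^sub>m E x"
    using impl x lueders_maximally_mixed[of dS E x, OF observable_effect(2)[OF obs x]]
    by (simp add: scheme_instrument_def \<sigma>_def)
  show ?thesis
  proof (cases "Z x = 0\<^sub>m dA dA")
    case True
    then have "(1 / of_nat dS) \<cdot>\<^sub>m E x = 0\<^sub>m dS dS" using out ptrace2_kron_zero[OF \<sigma>c] by simp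
    have "E x = 0\<^sub>m dS dS"
    proof (rule eq_matI)
      fix i j assume "i < dim_row (0\<^sub>m dS dS)" "j < dim_col (0\<^sub>m dS dS :: complex mat)"
      moreover have "((1 / of_nat dS) \<cdot>\<^sub>m E x) $$ (i, j) = 0\<^sub>m dS dS $$ (i, j)"
        using \<open>(1 / of_nat dS) \<cdot>\<^sub>m E x = 0\<^sub>m dS dS\<close> by simp
      ultimately show "E x $$ (i, j) = 0\<^sub>m dS dS $$ (i, j)"
        using dS observable_effect(1)[OF obs x] by simp
    qed (use observable_effect(1)[OF obs x] in auto)
    then show ?thesis using observable_effect(3)[OF obs x] by simp
  next
    case False
    then show ?thesis
      using pos_def_op_ptrace_pointer[OF \<sigma> Zx] out dS by (simp add: pos_def_op_scale_inverse)
  qed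
qed

theorem third_law_lueders_imp_completely_unsharp:
  assumes dS: "0 < dS" and obs: "observable dS X E" and nt: "nontrivial_obs dS X E"
    and sch: "third_law_scheme dS X dA \<xi> \<Phi> Z"
    and impl: "\<forall>x \<in> X. \<forall>\<rho> \<in> carrier_mat dS dS.
      scheme_instrument dS dA \<xi> \<Phi> Z x \<rho> = lueders dS E x \<rho>"
  shows "completely_unsharp X E"
  unfolding completely_unsharp_def
proof (intro ballI conjI)
  fix x assume x: "x \<in> X"
  note pd = third_law_lueders_pos_def[OF dS obs sch impl]
  note eff = observable_effect(1)[OF obs]
  show "\<not> eigenvalue (E x) 0"
    using pos_def_op_kernel[OF pd[OF x]] by (auto simp: eigenvalue_zero_iff[OF eff[OF x]])
  show "\<not> eigenvalue (E x) 1"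
  proof
    assume "eigenvalue (E x) 1"
    then obtain u where u: "u \<in> carrier_vec dS" "u \<noteq> 0\<^sub>v dS" "E x *\<^sub>v u = u"
      using eff[OF x] by (auto simp: eigenvalue_def eigenvector_def)
    obtain y where y: "y \<in> X" "y \<noteq> x" using observable_other_outcome[OF obs nt x] by blast
    have "E y *\<^sub>v u = 0\<^sub>v dS" by (rule observable_eigenvector_one[OF obs x y u(1,3)])
    then show False using pos_def_op_kernel[OF pd[OF y(1)] u(1)] u(2) by simp
  qed
qed

section \<open>Sufficiency: a measure-and-prepare scheme\<close>

text \<open>The channel \<open>M \<mapsto> \<Sum>\<^sub>c K\<^sub>c tr\<^sub>A(M) K\<^sub>c \<otimes> |c\<rangle>\<langle>c|\<close>, written out in the index \<open>p = i N + c\<close>.\<close>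

definition lueders_channel :: "nat \<Rightarrow> nat \<Rightarrow> (nat \<Rightarrow> complex mat) \<Rightarrow> complex mat \<Rightarrow> complex mat" where
  "lueders_channel d N K M = mat (d * N) (d * N) (\<lambda>(p, q).
     if p mod N = q mod N then (K (p mod N) * ptrace2 d N M * K (p mod N)) $$ (p div N, q div N) else 0)"

lemma lueders_channel_carrier [simp]:
  "lueders_channel d N K M \<in> carrier_mat (d * N) (d * N)"
  "dim_row (lueders_channel d N K M) = d * N" "dim_col (lueders_channel d N K M) = d * N"
  by (simp_all add: lueders_channel_def)

lemma index_lueders_channel:
  "i < d \<Longrightarrow> j < d \<Longrightarrow> a < N \<Longrightarrow> b < N \<Longrightarrow> lueders_channel d N K M $$ (i * N + a, j * N + b)
    = (if a = b then (K a * ptrace2 d N M * K a) $$ (i, j) else 0)"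
  by (simp add: lueders_channel_def index_mult_add_less)

lemma lueders_channel_add:
  assumes K: "\<And>c. c < N \<Longrightarrow> K c \<in> carrier_mat d d"
    and A: "A \<in> carrier_mat (d * N) (d * N)" and B: "B \<in> carrier_mat (d * N) (d * N)"
  shows "lueders_channel d N K (A + B) = lueders_channel d N K A + lueders_channel d N K B"
proof (rule eq_matI)
  have T: "ptrace2 d N A \<in> carrier_mat d d" "ptrace2 d N B \<in> carrier_mat d d" by auto
  have distrib: "K c * (ptrace2 d N A + ptrace2 d N B) * K c
      = K c * ptrace2 d N A * K c + K c * ptrace2 d N B * K c" if "c < N" for c
    using K[OF that] T
    by (simp add: mult_add_distrib_mat[OF K[OF that] T]
        add_mult_distrib_mat[OF mult_carrier_mat[OF K[OF that] T(1)] mult_carrier_mat[OF K[OF that] T(2)]])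
  fix p q assume "p < dim_row (lueders_channel d N K A + lueders_channel d N K B)"
    "q < dim_col (lueders_channel d N K A + lueders_channel d N K B)"
  then have p: "p < d * N" and q: "q < d * N" by auto
  then show "lueders_channel d N K (A + B) $$ (p, q)
      = (lueders_channel d N K A + lueders_channel d N K B) $$ (p, q)"
    using div_mod_less_mult[OF p] div_mod_less_mult[OF q] distrib
      carrier_matD[OF K[of "q mod N"]]
    by (auto simp: lueders_channel_def ptrace2_add[OF A B])
qed auto

lemma lueders_channel_smult:
  assumes K: "\<And>c. c < N \<Longrightarrow> K c \<in> carrier_mat d d" and A: "A \<in> carrier_mat (d * N) (d * N)"
  shows "lueders_channel d N K (e \<cdot>\<^sub>m A) = e \<cdot>\<^sub>m lueders_channel d N K A"
proof (rule eq_matI)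
  have T: "ptrace2 d N A \<in> carrier_mat d d" by auto
  have distrib: "K c * (e \<cdot>\<^sub>m ptrace2 d N A) * K c = e \<cdot>\<^sub>m (K c * ptrace2 d N A * K c)"
    if "c < N" for c
    using K[OF that] T
    by (simp add: mult_smult_distrib[OF K[OF that] T] mult_smult_assoc_mat[OF mult_carrier_mat[OF K[OF that] T]])
  fix p q assume "p < dim_row (e \<cdot>\<^sub>m lueders_channel d N K A)" "q < dim_col (e \<cdot>\<^sub>m lueders_channel d N K A)"
  then have p: "p < d * N" and q: "q < d * N" by auto
  then show "lueders_channel d N K (e \<cdot>\<^sub>m A) $$ (p, q) = (e \<cdot>\<^sub>m lueders_channel d N K A) $$ (p, q)"
    using div_mod_less_mult[OF p] div_mod_less_mult[OF q] distrib
      carrier_matD[OF K[of "q mod N"]]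
    by (auto simp: lueders_channel_def ptrace2_smult[OF A])
qed auto

lemma linear_map_lueders_channel:
  assumes "\<And>c. c < N \<Longrightarrow> K c \<in> carrier_mat d d"
  shows "Defs.linear_map (d * N) (d * N) (lueders_channel d N K)"
    \<comment> \<open>unqualified \<open>linear_map\<close> is the one of HOL-Algebra\<close>
  using lueders_channel_add[OF assms] lueders_channel_smult[OF assms]
  by (simp add: Defs.linear_map_def)

definition lueders_kraus :: "nat \<Rightarrow> nat \<Rightarrow> (nat \<Rightarrow> complex mat) \<Rightarrow> nat \<Rightarrow> nat \<Rightarrow> complex mat" where
  "lueders_kraus d N K c a = kron (K c) (mat N N (\<lambda>(x, y). if x = c \<and> y = a then 1 else 0))"

lemma lueders_kraus_carrier:
  "K c \<in> carrier_mat d d \<Longrightarrow> lueders_kraus d N K c a \<in> carrier_mat (d * N) (d * N)"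
  by (simp add: lueders_kraus_def)

lemma lueders_kraus_row_sum:
  assumes K: "K c \<in> carrier_mat d d" and i: "i < d" and c1: "c1 < N" and a: "a < N"
  shows "(\<Sum>p<d * N. lueders_kraus d N K c a $$ (i * N + c1, p) * f p)
    = (if c1 = c then \<Sum>i'<d. K c $$ (i, i') * f (i' * N + a) else 0)"
  using assms
  by (simp add: lueders_kraus_def sum_lessThan_mult index_kron[OF K]
      if_distrib[of "\<lambda>x. x * _"] if_distrib[of "\<lambda>x. _ * x"] cong: if_cong)

lemma lueders_kraus_col_sum:
  assumes K: "K c \<in> carrier_mat d d" and j: "j < d" and c2: "c2 < N" and a: "a < N"
  shows "(\<Sum>q<d * N. g q * cnj (lueders_kraus d N K c a $$ (j * N + c2, q)))
    = (if c2 = c then \<Sum>j'<d. g (j' * N + a) * cnj (K c $$ (j, j')) else 0)"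
proof -
  have "(\<Sum>q<d * N. g q * cnj (lueders_kraus d N K c a $$ (j * N + c2, q)))
      = cnj (\<Sum>q<d * N. lueders_kraus d N K c a $$ (j * N + c2, q) * cnj (g q))"
    by (simp add: cnj_sum mult.commute)
  also have "\<dots> = cnj (if c2 = c then \<Sum>j'<d. K c $$ (j, j') * cnj (g (j' * N + a)) else 0)"
    by (simp only: lueders_kraus_row_sum[where K = K and c = c, OF K j c2 a])
  finally show ?thesis by (simp add: cnj_sum mult.commute)
qed

lemma index_lueders_kraus_congruence:
  assumes K: "K c \<in> carrier_mat d d" and M: "M \<in> carrier_mat (d * N) (d * N)"
    and i: "i < d" and j: "j < d" and c1: "c1 < N" and c2: "c2 < N" and a: "a < N"
  shows "(lueders_kraus d N K c a * M * mat_adjoint (lueders_kraus d N K c a)) $$ (i * N + c1, j * N + c2)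
    = (if c1 = c \<and> c2 = c then
         \<Sum>i'<d. \<Sum>j'<d. K c $$ (i, i') * M $$ (i' * N + a, j' * N + a) * cnj (K c $$ (j, j'))
       else 0)"
proof -
  note V = lueders_kraus_carrier[where K = K and c = c, OF K, of N a]
  have p: "i * N + c1 < d * N" and q: "j * N + c2 < d * N"
    using i j c1 c2 by (simp_all add: index_mult_add_less)
  have "(lueders_kraus d N K c a * M * mat_adjoint (lueders_kraus d N K c a)) $$ (i * N + c1, j * N + c2)
      = (\<Sum>p'<d * N. lueders_kraus d N K c a $$ (i * N + c1, p') *
          (\<Sum>q'<d * N. M $$ (p', q') * cnj (lueders_kraus d N K c a $$ (j * N + c2, q'))))"
    by (simp add: index_mult_mult_adjoint[OF V M p q] sum_distrib_left mult.assoc)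
  also have "\<dots> = (\<Sum>p'<d * N. lueders_kraus d N K c a $$ (i * N + c1, p') *
      (if c2 = c then \<Sum>j'<d. M $$ (p', j' * N + a) * cnj (K c $$ (j, j')) else 0))"
    by (simp only: lueders_kraus_col_sum[where K = K and c = c, OF K j c2 a])
  also have "\<dots> = (if c1 = c \<and> c2 = c then
      \<Sum>i'<d. \<Sum>j'<d. K c $$ (i, i') * M $$ (i' * N + a, j' * N + a) * cnj (K c $$ (j, j'))
      else 0)"
    by (simp add: lueders_kraus_row_sum[where K = K and c = c, OF K i c1 a] sum_distrib_left mult.assoc)
  finally show ?thesis .
qed

lemma lueders_channel_kraus:
  assumes K: "\<And>c. c < N \<Longrightarrow> K c \<in> carrier_mat d d" and herm: "\<And>c. c < N \<Longrightarrow> hermitian (K c)"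
    and M: "M \<in> carrier_mat (d * N) (d * N)"
  shows "lueders_channel d N K M = msum (d * N) ({..<N} \<times> {..<N})
    (\<lambda>(c, a). lueders_kraus d N K c a * M * mat_adjoint (lueders_kraus d N K c a))"
proof (rule eq_matI)
  fix p q assume "p < dim_row (msum (d * N) ({..<N} \<times> {..<N})
    (\<lambda>(c, a). lueders_kraus d N K c a * M * mat_adjoint (lueders_kraus d N K c a)))"
    "q < dim_col (msum (d * N) ({..<N} \<times> {..<N})
    (\<lambda>(c, a). lueders_kraus d N K c a * M * mat_adjoint (lueders_kraus d N K c a)))"
  then have p: "p < d * N" and q: "q < d * N" by (auto simp: msum_def)
  then have N: "0 < N" by (cases N) auto
  define i c1 j c2 where "i = p div N" "c1 = p mod N" "j = q div N" "c2 = q mod N"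
  have i: "i < d" and j: "j < d" and c1: "c1 < N" and c2: "c2 < N"
    using p q N by (auto simp: i_c1_j_c2_def less_mult_imp_div_less)
  have pq: "p = i * N + c1" "q = j * N + c2" by (simp_all add: i_c1_j_c2_def)
  define S where "S c a = (\<Sum>i'<d. \<Sum>j'<d.
    K c $$ (i, i') * M $$ (i' * N + a, j' * N + a) * cnj (K c $$ (j, j')))" for c a
  have "msum (d * N) ({..<N} \<times> {..<N})
      (\<lambda>(c, a). lueders_kraus d N K c a * M * mat_adjoint (lueders_kraus d N K c a)) $$ (p, q)
    = (\<Sum>c<N. \<Sum>a<N.
        (lueders_kraus d N K c a * M * mat_adjoint (lueders_kraus d N K c a)) $$ (p, q))"
    using p q by (simp add: msum_def sum.cartesian_product split_def)
  also have "\<dots> = (\<Sum>c<N. \<Sum>a<N. if c1 = c \<and> c2 = c then S c a else 0)"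
    by (intro sum.cong refl) (simp add: pq index_lueders_kraus_congruence[where K = K, OF K M i j c1 c2] S_def)
  also have "\<dots> = (\<Sum>c<N. if c = c1 then (if c2 = c1 then \<Sum>a<N. S c a else 0) else 0)"
    by (intro sum.cong refl) auto
  also have "\<dots> = (if c1 = c2 then \<Sum>a<N. S c1 a else 0)" using c1 by simp
  also have "\<dots> = lueders_channel d N K M $$ (p, q)"
  proof -
    have T: "ptrace2 d N M \<in> carrier_mat d d" by simp
    have "mat_adjoint (K c1) = K c1" using herm[OF c1] by (simp add: hermitian_def)
    then have "(K c1 * ptrace2 d N M * K c1) $$ (i, j) = (\<Sum>a<N. S c1 a)"
      using index_mult_mult_adjoint[OF K[OF c1] T i j] i j
      by (simp add: S_def ptrace2_def sum_distrib_left sum_distrib_right mult_ac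
          sum.swap[where A = "{..<d}" and B = "{..<N}"])
    then show ?thesis by (auto simp: pq index_lueders_channel[OF i j c1 c2])
  qed
  finally show "lueders_channel d N K M $$ (p, q) = msum (d * N) ({..<N} \<times> {..<N})
    (\<lambda>(c, a). lueders_kraus d N K c a * M * mat_adjoint (lueders_kraus d N K c a)) $$ (p, q)" ..
qed (auto simp: msum_def)

lemma completely_positive_lueders_channel:
  assumes K: "\<And>c. c < N \<Longrightarrow> K c \<in> carrier_mat d d" and herm: "\<And>c. c < N \<Longrightarrow> hermitian (K c)"
  shows "completely_positive (d * N) (d * N) (lueders_channel d N K)"
  using lueders_channel_kraus[OF K herm] lueders_kraus_carrier[OF K]
  by (intro completely_positive_kraus[where J = "{..<N} \<times> {..<N}"
        and V = "\<lambda>(c, a). lueders_kraus d N K c a"]) (auto simp: split_def)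

lemma trace_preserving_lueders_channel:
  assumes K: "\<And>c. c < N \<Longrightarrow> K c \<in> carrier_mat d d"
    and complete: "msum d {..<N} (\<lambda>c. K c * K c) = 1\<^sub>m d"
  shows "trace_preserving (d * N) (lueders_channel d N K)"
  unfolding trace_preserving_def
proof
  fix M :: "complex mat" assume M: "M \<in> carrier_mat (d * N) (d * N)"
  define T where "T = ptrace2 d N M"
  have T: "T \<in> carrier_mat d d" by (simp add: T_def)
  have "mtrace (lueders_channel d N K M) = (\<Sum>c<N. mtrace (K c * T * K c))"
    by (simp add: mtrace_def sum_lessThan_mult index_lueders_channel T_def carrier_matD[OF K]
        sum.swap[where A = "{..<d}" and B = "{..<N}"])
  also have "\<dots> = (\<Sum>c<N. mtrace (K c * K c * T))"
  proof (rule sum.cong[OF refl])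
    fix c assume "c \<in> {..<N}"
    then have Kc: "K c \<in> carrier_mat d d" using K by simp
    have "mtrace (K c * T * K c) = mtrace (K c * (K c * T))"
      by (rule mtrace_mult_commute[OF mult_carrier_mat[OF Kc T] Kc])
    then show "mtrace (K c * T * K c) = mtrace (K c * K c * T)"
      by (simp add: assoc_mult_mat[OF Kc Kc T])
  qed
  also have "\<dots> = (\<Sum>c<N. \<Sum>i<d. \<Sum>l<d. (K c * K c) $$ (i, l) * T $$ (l, i))"
  proof (rule sum.cong[OF refl])
    fix c assume "c \<in> {..<N}"
    then have Kc: "K c \<in> carrier_mat d d" using K by simp
    show "mtrace (K c * K c * T) = (\<Sum>i<d. \<Sum>l<d. (K c * K c) $$ (i, l) * T $$ (l, i))"
      by (rule mtrace_mult[OF mult_carrier_mat[OF Kc Kc] T])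
  qed
  also have "\<dots> = (\<Sum>i<d. \<Sum>l<d. msum d {..<N} (\<lambda>c. K c * K c) $$ (i, l) * T $$ (l, i))"
    by (simp add: msum_def sum_distrib_right sum.swap[where A = "{..<N}" and B = "{..<d}"])
  also have "\<dots> = (\<Sum>i<d. T $$ (i, i))"
    by (simp add: complete if_distrib[of "\<lambda>x. x * _"] cong: if_cong)
  also have "\<dots> = mtrace M" using mtrace_ptrace2[OF M] by (simp add: T_def mtrace_def)
  finally show "mtrace (lueders_channel d N K M) = mtrace M" .
qed

lemma qform_lueders_channel:
  "qform (d * N) (lueders_channel d N K M) v
    = (\<Sum>a<N. qform d (K a * ptrace2 d N M * K a) (vec d (\<lambda>i. v $ (i * N + a))))"
proof -
  have "qform (d * N) (lueders_channel d N K M) v = (\<Sum>i<d. \<Sum>a<N. \<Sum>j<d.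
      cnj (v $ (i * N + a)) * (K a * ptrace2 d N M * K a) $$ (i, j) * v $ (j * N + a))"
    by (simp add: qform_def sum_lessThan_mult index_lueders_channel if_distrib[of "\<lambda>x. x * _"]
        if_distrib[of "\<lambda>x. _ * x"] cong: if_cong)
  then show ?thesis by (simp add: qform_def sum.swap[where A = "{..<d}" and B = "{..<N}"])
qed

lemma pos_def_op_lueders_channel:
  assumes K: "\<And>c. c < N \<Longrightarrow> K c \<in> carrier_mat d d" and herm: "\<And>c. c < N \<Longrightarrow> hermitian (K c)"
    and inj: "\<And>c u. c < N \<Longrightarrow> u \<in> carrier_vec d \<Longrightarrow> K c *\<^sub>v u = 0\<^sub>v d \<Longrightarrow> u = 0\<^sub>v d"
    and M: "pos_def_op (d * N) M" and N: "0 < N"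
  shows "pos_def_op (d * N) (lueders_channel d N K M)"
  unfolding pos_def_op_iff
proof (intro conjI ballI impI lueders_channel_carrier)
  define T where "T = ptrace2 d N M"
  have T: "pos_def_op d T" unfolding T_def by (rule pos_def_op_ptrace2[OF M N])
  have Tc: "T \<in> carrier_mat d d" by (simp add: T_def)
  define w where "w v a = vec d (\<lambda>i. v $ (i * N + a))" for v :: "complex vec" and a
  have congr: "qform d (K a * T * K a) u = qform d T (K a *\<^sub>v u)"
    if "a < N" "u \<in> carrier_vec d" for a u
    using qform_congruence[OF Tc K[OF that(1)] that(2)] herm[OF that(1)] by (simp add: hermitian_def)
  fix v :: "complex vec" assume v: "v \<in> carrier_vec (d * N)" "v \<noteq> 0\<^sub>v (d * N)"
  then obtain p where p: "p < d * N" "v $ p \<noteq> 0" by (metis carrier_vecD eq_vecI index_zero_vec)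
  have a: "p mod N < N" using N by simp
  have "w v (p mod N) $ (p div N) \<noteq> 0" using p by (simp add: w_def less_mult_imp_div_less)
  then have "w v (p mod N) \<noteq> 0\<^sub>v d" using p by (metis index_zero_vec(1) less_mult_imp_div_less)
  then have "K (p mod N) *\<^sub>v w v (p mod N) \<noteq> 0\<^sub>v d" using inj[OF a] by (auto simp: w_def)
  then have "0 < qform d (K (p mod N) * T * K (p mod N)) (w v (p mod N))"
    using T K[OF a] by (simp add: congr[OF a] pos_def_op_iff w_def)
  moreover have "0 \<le> qform d (K b * T * K b) (w v b)" if "b < N" for b
    using pos_def_op_imp_positive_op[OF T] K[OF that]
    by (simp add: congr[OF that] positive_op_iff w_def)
  ultimately have "0 < (\<Sum>b<N. qform d (K b * T * K b) (w v b))"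
    using a by (intro sum_pos2[of _ "p mod N"]) auto
  then show "0 < qform (d * N) (lueders_channel d N K M) v"
    by (simp add: qform_lueders_channel T_def w_def)
qed

lemma ptrace2_pointer_lueders_channel:
  assumes K: "\<And>c. c < N \<Longrightarrow> K c \<in> carrier_mat d d" and \<rho>: "\<rho> \<in> carrier_mat d d"
    and \<xi>: "\<xi> \<in> carrier_mat N N" "mtrace \<xi> = 1" and c: "c < N"
  shows "ptrace2 d N (kron (1\<^sub>m d) (mat_diag N (\<lambda>a. if a = c then 1 else 0))
      * lueders_channel d N K (kron \<rho> \<xi>)) = K c * \<rho> * K c"
proof (rule eq_matI)
  fix i j assume "i < dim_row (K c * \<rho> * K c)" "j < dim_col (K c * \<rho> * K c)"
  then have i: "i < d" and j: "j < d" using K[OF c] by auto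
  have "ptrace2 d N (kron (1\<^sub>m d) (mat_diag N (\<lambda>a. if a = c then 1 else 0))
      * lueders_channel d N K (kron \<rho> \<xi>)) $$ (i, j) = (\<Sum>b<N. \<Sum>e<N.
        (if b = e then if e = c then 1 else 0 else 0) * lueders_channel d N K (kron \<rho> \<xi>) $$ (i * N + e, j * N + b))"
    by (simp add: index_ptrace_pointer[OF lueders_channel_carrier(1) mat_diag_dim i j]) (simp add: mat_diag_def)
  also have "\<dots> = (\<Sum>b<N. if b = c then
      (\<Sum>e<N. if e = c then lueders_channel d N K (kron \<rho> \<xi>) $$ (i * N + e, j * N + b) else 0) else 0)"
    by (intro sum.cong refl) (auto simp: if_distrib[of "\<lambda>x. x * _"] cong: if_cong)
  also have "\<dots> = lueders_channel d N K (kron \<rho> \<xi>) $$ (i * N + c, j * N + c)" using c by simp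
  also have "\<dots> = (K c * \<rho> * K c) $$ (i, j)"
  proof -
    have "1 \<cdot>\<^sub>m \<rho> = \<rho>" by (rule eq_matI) auto
    then show ?thesis using \<xi> by (simp add: index_lueders_channel[OF i j c c] ptrace2_kron[OF \<rho> \<xi>(1)])
  qed
  finally show "ptrace2 d N (kron (1\<^sub>m d) (mat_diag N (\<lambda>a. if a = c then 1 else 0))
      * lueders_channel d N K (kron \<rho> \<xi>)) $$ (i, j) = (K c * \<rho> * K c) $$ (i, j)" .
qed (use K[OF c] in auto)

lemma third_law_channel_lueders_channel:
  assumes N: "0 < N" and K: "\<And>c. c < N \<Longrightarrow> K c \<in> carrier_mat d d"
    and herm: "\<And>c. c < N \<Longrightarrow> hermitian (K c)"
    and inj: "\<And>c u. c < N \<Longrightarrow> u \<in> carrier_vec d \<Longrightarrow> K c *\<^sub>v u = 0\<^sub>v d \<Longrightarrow> u = 0\<^sub>v d"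
    and complete: "msum d {..<N} (\<lambda>c. K c * K c) = 1\<^sub>m d"
  shows "third_law_channel (d * N) (d * N) (lueders_channel d N K)"
  unfolding third_law_channel_def is_channel_def
proof (intro conjI allI impI)
  show "Defs.linear_map (d * N) (d * N) (lueders_channel d N K)"
    by (rule linear_map_lueders_channel[OF K])
  show "completely_positive (d * N) (d * N) (lueders_channel d N K)"
    by (rule completely_positive_lueders_channel[OF K herm])
  show tp: "trace_preserving (d * N) (lueders_channel d N K)"
    by (rule trace_preserving_lueders_channel[OF K complete])
  fix \<rho> assume \<rho>: "full_rank_state (d * N) \<rho>"
  then have "pos_def_op (d * N) (lueders_channel d N K \<rho>)"
    using pos_def_op_lueders_channel[OF K herm inj _ N] by (simp add: full_rank_state_def)
  moreover have "mtrace (lueders_channel d N K \<rho>) = 1"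
    using tp \<rho> by (simp add: trace_preserving_def full_rank_state_def is_state_def positive_op_def)
  ultimately show "full_rank_state (d * N) (lueders_channel d N K \<rho>)"
    by (simp add: full_rank_state_def is_state_def pos_def_op_imp_positive_op)
qed

lemma msum_pointer_projections:
  assumes f: "bij_betw f X {..<N}"
  shows "msum N X (\<lambda>x. mat_diag N (\<lambda>a. if a = f x then 1 else 0)) = (1\<^sub>m N :: complex mat)"
proof (rule eq_matI)
  define g where "g = the_inv_into X f"
  have g: "bij_betw g {..<N} X" unfolding g_def by (rule bij_betw_the_inv_into[OF f])
  have fg: "f (g c) = c" if "c < N" for c
    using f that by (simp add: g_def f_the_inv_into_f_bij_betw)
  fix a b assume "a < dim_row (1\<^sub>m N :: complex mat)" "b < dim_col (1\<^sub>m N :: complex mat)"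
  then have a: "a < N" and b: "b < N" by auto
  have "msum N X (\<lambda>x. mat_diag N (\<lambda>a. if a = f x then 1 else 0)) $$ (a, b)
      = (\<Sum>x\<in>X. mat_diag N (\<lambda>a. if a = f x then 1 else 0) $$ (a, b))"
    using a b by (simp add: msum_def)
  also have "\<dots> = (\<Sum>c<N. mat_diag N (\<lambda>a. if a = f (g c) then 1 else 0) $$ (a, b))"
    by (rule sum.reindex_bij_betw[OF g, symmetric])
  also have "\<dots> = (\<Sum>c<N. if c = a then 1\<^sub>m N $$ (a, b) else 0)"
    using a b by (intro sum.cong refl) (auto simp: mat_diag_def fg)
  finally show "msum N X (\<lambda>x. mat_diag N (\<lambda>a. if a = f x then 1 else 0)) $$ (a, b) = 1\<^sub>m N $$ (a, b)"
    using a by simp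
qed (auto simp: msum_def)

lemma psd_sqrt_kernel:
  assumes A: "positive_op d A" and ev: "\<not> eigenvalue A 0"
    and u: "u \<in> carrier_vec d" "psd_sqrt d A *\<^sub>v u = 0\<^sub>v d"
  shows "u = 0\<^sub>v d"
proof -
  have S: "psd_sqrt d A \<in> carrier_mat d d" using psd_sqrt(1)[OF A] by (simp add: positive_op_def)
  have Ac: "A \<in> carrier_mat d d" using A by (simp add: positive_op_def)
  have "A *\<^sub>v u = (psd_sqrt d A * psd_sqrt d A) *\<^sub>v u" by (simp only: psd_sqrt(2)[OF A])
  also have "\<dots> = psd_sqrt d A *\<^sub>v (psd_sqrt d A *\<^sub>v u)" by (rule assoc_mult_mat_vec[OF S S u(1)])
  also have "\<dots> = 0\<^sub>v d" using u(2) S by auto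
  finally show ?thesis using ev eigenvalue_zero_iff[OF Ac] u(1) by blast
qed

lemma observable_nonempty:
  assumes "0 < d" "observable d X E"
  shows "X \<noteq> {}"
proof
  assume "X = {}"
  moreover have "msum d {} E = 0\<^sub>m d d" by (rule eq_matI) (auto simp: msum_def)
  ultimately have "1\<^sub>m d = (0\<^sub>m d d :: complex mat)" using assms(2) by (simp add: observable_def)
  then show False using assms(1) by (metis index_one_mat(1) index_zero_mat(1) zero_neq_one)
qed

theorem completely_unsharp_imp_third_law_lueders:
  assumes dS: "0 < dS" and obs: "observable dS X E" and cu: "completely_unsharp X E"
  shows "\<exists>(dA::nat) \<xi> \<Phi> Z. 0 < dA \<and> third_law_scheme dS X dA \<xi> \<Phi> Z \<and>
    (\<forall>x \<in> X. \<forall>\<rho> \<in> carrier_mat dS dS.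
       scheme_instrument dS dA \<xi> \<Phi> Z x \<rho> = lueders dS E x \<rho>)"
proof -
  have fin: "finite X" and complete: "msum dS X E = 1\<^sub>m dS"
    using obs by (auto simp: observable_def)
  note eff = observable_effect[OF obs]
  define N where "N = card X"
  have N: "0 < N" using fin observable_nonempty[OF dS obs] by (simp add: N_def card_gt_0_iff)
  obtain f where f: "bij_betw f X {..<N}"
    using ex_bij_betw_finite_nat[OF fin] by (auto simp: N_def atLeast0LessThan)
  define g where "g = the_inv_into X f"
  have g: "bij_betw g {..<N} X" unfolding g_def by (rule bij_betw_the_inv_into[OF f])
  have gX: "g c \<in> X" if "c < N" for c using g that by (auto simp: bij_betw_def)
  have fX: "f x < N" if "x \<in> X" for x using f that by (auto simp: bij_betw_def)
  have gf: "g (f x) = x" if "x \<in> X" for x using f that by (simp add: g_def bij_betw_def the_inv_into_f_f)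
  define K where "K c = psd_sqrt dS (E (g c))" for c
  have K_psd: "positive_op dS (K c)" and KK: "K c * K c = E (g c)" if "c < N" for c
    using psd_sqrt[OF eff(2)[OF gX[OF that]]] by (simp_all add: K_def)
  have K: "K c \<in> carrier_mat dS dS" if "c < N" for c using K_psd[OF that] by (simp add: positive_op_def)
  have herm: "hermitian (K c)" if "c < N" for c by (rule positive_op_hermitian[OF K_psd[OF that]])
  have inj: "u = 0\<^sub>v dS" if "c < N" "u \<in> carrier_vec dS" "K c *\<^sub>v u = 0\<^sub>v dS" for c u
    using psd_sqrt_kernel[OF eff(2)[OF gX]] cu gX that by (auto simp: completely_unsharp_def K_def)
  have "msum dS {..<N} (\<lambda>c. K c * K c) = msum dS X E"
    by (rule eq_matI) (auto simp: msum_def KK sum.reindex_bij_betw[OF g, symmetric])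
  then have "third_law_channel (dS * N) (dS * N) (lueders_channel dS N K)"
    using third_law_channel_lueders_channel[OF N K herm inj] complete by simp
  moreover have "positive_op N (mat_diag N (\<lambda>a. if a = f x then 1 else 0))" for x
    by (rule positive_op_mat_diag) (simp add: less_eq_complex_def)
  ultimately have "third_law_scheme dS X N (maximally_mixed N) (lueders_channel dS N K)
      (\<lambda>x. mat_diag N (\<lambda>a. if a = f x then 1 else 0))"
    using full_rank_state_maximally_mixed[OF N] msum_pointer_projections[OF f]
    by (simp add: third_law_scheme_def measurement_scheme_def full_rank_state_def third_law_channel_def)
  moreover have "scheme_instrument dS N (maximally_mixed N) (lueders_channel dS N K)
      (\<lambda>x. mat_diag N (\<lambda>a. if a = f x then 1 else 0)) x \<rho> = lueders dS E x \<rho>"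
    if "x \<in> X" "\<rho> \<in> carrier_mat dS dS" for x \<rho>
    using ptrace2_pointer_lueders_channel[where K = K, OF K that(2) maximally_mixed_carrier(1)
        mtrace_maximally_mixed[OF N] fX[OF that(1)]]
    by (simp add: scheme_instrument_def lueders_def K_def gf[OF that(1)])
  ultimately show ?thesis using N by blast
qed

theorem mainTheorem12:
  fixes dS :: nat and X :: "'x set" and E :: "'x \<Rightarrow> complex mat"
  assumes "2 \<le> dS"
    and "observable dS X E"
    and "nontrivial_obs dS X E"
  shows "(\<exists>(dA::nat) \<xi> \<Phi> Z. 0 < dA \<and> third_law_scheme dS X dA \<xi> \<Phi> Z \<and>
            (\<forall>x \<in> X. \<forall>\<rho> \<in> carrier_mat dS dS.
               scheme_instrument dS dA \<xi> \<Phi> Z x \<rho> = lueders dS E x \<rho>))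
         \<longleftrightarrow> completely_unsharp X E"
proof -
  have dS: "0 < dS" using assms(1) by simp
  show ?thesis
    using third_law_lueders_imp_completely_unsharp[OF dS assms(2,3)]
      completely_unsharp_imp_third_law_lueders[OF dS assms(2)] by blast
qed

end
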